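(* Every two-qubit quantum computation $U\in U(4)$ can be realized exactly, up to a global phase, by a circuit of at most $23$ elementary gates, of which at most $4$ are CNOT gates; that is, there exist $c\in\mathbb{C}$ with $|c|=1$ and elementary gates $G_1,\dots,G_m$ with $m\le 23$, at most $4$ of them CNOTs, such that $U=c\,G_m G_{m-1}\cdots G_1$. No ancilla qubits are used.
   Context: Two-qubit computations are $4\times4$ unitary matrices acting on $\mathbb{C}^2\otimes\mathbb{C}^2$ with computational basis $|00\rangle,|01\rangle,|10\rangle,|11\rangle$ in this order. The elementary gates are the $4\times 4$ matrices of the following forms: $R_y(\theta)\otimes \mathbf{1}$ or $\mathbf{1}\otimes R_y(\theta)$, where $R_y(\theta)=\begin{pmatrix}\cos\theta/2 & \sin\theta/2\\ -\sin\theta/2 & \cos\theta/2\end{pmatrix}$, $0\le\theta<2\pi$; $R_z(\alpha)\otimes\mathbf{1}$ or $\mathbf{1}\otimes R_z(\alpha)$, where $R_z(\alpha)=\mathrm{diag}(e^{-i\alpha/2},e^{i\alpha/2})$, $0\le\alpha<2\pi$; and the two CNOT gates, namely the permutation matrix swapping $|10\rangle\leftrightarrow|11\rangle$ and the permutation matrix swapping $|01\rangle\leftrightarrow|11\rangle$ (each fixing the other basis vectors). A circuit computes the product of its gate matrices. *)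

theory Defs
  imports Complex_Main "Jordan_Normal_Form.Matrix"
begin

text \<open>Two-qubit matrices are 4x4 complex matrices (Jordan_Normal_Form type complex mat),
  indexed 0..3 corresponding to the basis 00, 01, 10, 11 in this order.
  Index 2*a+b corresponds to the basis vector with first qubit a and second qubit b.\<close>

definition conj_transpose :: "complex mat \<Rightarrow> complex mat" where
  "conj_transpose A = mat (dim_col A) (dim_row A) (\<lambda>(i,j). cnj (A $$ (j,i)))"

definition unitary4 :: "complex mat \<Rightarrow> bool" where
  "unitary4 U \<longleftrightarrow> U \<in> carrier_mat 4 4 \<and> U * conj_transpose U = 1\<^sub>m 4"

definition Ry :: "real \<Rightarrow> complex mat" where
  "Ry \<theta> = mat_of_rows_list 2
     [[complex_of_real (cos (\<theta>/2)), complex_of_real (sin (\<theta>/2))],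
      [complex_of_real (- sin (\<theta>/2)), complex_of_real (cos (\<theta>/2))]]"

definition Rz :: "real \<Rightarrow> complex mat" where
  "Rz \<alpha> = mat_of_rows_list 2
     [[exp (- \<i> * complex_of_real (\<alpha>/2)), 0],
      [0, exp (\<i> * complex_of_real (\<alpha>/2))]]"

definition id2 :: "complex mat" where "id2 = 1\<^sub>m 2"

definition kron2 :: "complex mat \<Rightarrow> complex mat \<Rightarrow> complex mat" where
  "kron2 A B = mat 4 4 (\<lambda>(i,j). A $$ (i div 2, j div 2) * B $$ (i mod 2, j mod 2))"

definition perm4 :: "(nat \<Rightarrow> nat) \<Rightarrow> complex mat" where
  "perm4 p = mat 4 4 (\<lambda>(i,j). if i = p j then 1 else 0)"

text \<open>CNOT swapping |10> (index 2) and |11> (index 3).\<close>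
definition CNOT1 :: "complex mat" where
  "CNOT1 = perm4 (Fun.swap 2 3 id)"

text \<open>CNOT swapping |01> (index 1) and |11> (index 3).\<close>
definition CNOT2 :: "complex mat" where
  "CNOT2 = perm4 (Fun.swap 1 3 id)"

definition cnot_gates :: "complex mat set" where
  "cnot_gates = {CNOT1, CNOT2}"

definition elementary_gates :: "complex mat set" where
  "elementary_gates =
     {kron2 (Ry \<theta>) id2 | \<theta>. 0 \<le> \<theta> \<and> \<theta> < 2*pi} \<union>
     {kron2 id2 (Ry \<theta>) | \<theta>. 0 \<le> \<theta> \<and> \<theta> < 2*pi} \<union>
     {kron2 (Rz \<alpha>) id2 | \<alpha>. 0 \<le> \<alpha> \<and> \<alpha> < 2*pi} \<union>
     {kron2 id2 (Rz \<alpha>) | \<alpha>. 0 \<le> \<alpha> \<and> \<alpha> < 2*pi} \<union>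
     cnot_gates"

text \<open>The circuit [G1, ..., Gm] computes G_m * ... * G_1.\<close>
definition circuit_matrix :: "complex mat list \<Rightarrow> complex mat" where
  "circuit_matrix gs = foldl (\<lambda>acc g. g * acc) (1\<^sub>m 4) gs"

end

theory Submission
  imports Defs "Jordan_Normal_Form.Spectral_Radius"
begin

text \<open>Conjugation by the magic basis \<open>M\<close> turns local unitaries \<open>A \<otimes> B\<close> into real orthogonal
  matrices; in particular \<open>M G M\<^sup>*\<close> is local for each Givens rotation \<open>G\<close>. For unitary \<open>U\<close> put
  \<open>V = M\<^sup>* U M\<close>. The matrix \<open>V\<^sup>T V\<close> is symmetric and unitary, so its eigenspaces are spanned by
  real vectors and a product \<open>Q\<^sub>1\<close> of Givens rotations diagonalises it. Dividing \<open>V Q\<^sub>1\<close> by a square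
  root of that diagonal leaves a real orthogonal matrix, which a second product \<open>Q\<^sub>2\<close> of Givens
  rotations reduces to diagonal form. Hence \<open>U = (M Q\<^sub>2 M\<^sup>*) (M D M\<^sup>*) (M Q\<^sub>1\<^sup>T M\<^sup>*)\<close> with \<open>D\<close>
  diagonal unitary. Each outer factor is a tensor product of one-qubit unitaries, i.e. 6 rotations
  by the Euler ZYZ decomposition, and \<open>M D M\<^sup>*\<close> is, up to a phase, a fixed circuit of 4 CNOTs and
  5 rotations: 21 gates in all.\<close>

lemma less_2_iff: "(i::nat) < 2 \<longleftrightarrow> i = 0 \<or> i = 1" by auto

lemma less_4_iff: "(i::nat) < 4 \<longleftrightarrow> i = 0 \<or> i = 1 \<or> i = 2 \<or> i = 3" by auto

lemma less_3_cases: "(k::nat) < 3 \<Longrightarrow> k = 0 \<or> k = 1 \<or> k = 2"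
  by auto

lemma sum_lessThan_4: "(\<Sum>l<4::nat. f l) = f 0 + f 1 + f 2 + f 3"
  by (simp add: numeral_eq_Suc)

text \<open>Entry-wise constructors of 2x2 and 4x4 matrices: products of concrete gate matrices are
  computed by rewriting with \<open>mat2_mult\<close> and \<open>mat4_mult\<close>.\<close>

definition mat2 :: "complex \<Rightarrow> complex \<Rightarrow> complex \<Rightarrow> complex \<Rightarrow> complex mat" where
  "mat2 a00 a01 a10 a11 = mat 2 2 (\<lambda>(i,j). [[a00,a01],[a10,a11]] ! i ! j)"

lemma mat2_carrier [simp]:
  "mat2 a00 a01 a10 a11 \<in> carrier_mat 2 2"
  "dim_row (mat2 a00 a01 a10 a11) = 2" "dim_col (mat2 a00 a01 a10 a11) = 2"
  by (simp_all add: mat2_def)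

lemma mat2_index [simp]:
  "mat2 a00 a01 a10 a11 $$ (0,0) = a00" "mat2 a00 a01 a10 a11 $$ (0,1) = a01"
  "mat2 a00 a01 a10 a11 $$ (1,0) = a10" "mat2 a00 a01 a10 a11 $$ (1,1) = a11"
  by (simp_all add: mat2_def)

lemma mat2_eq_iff:
  "mat2 a00 a01 a10 a11 = mat2 b00 b01 b10 b11 \<longleftrightarrow> a00 = b00 \<and> a01 = b01 \<and> a10 = b10 \<and> a11 = b11"
  by (metis mat2_index)

lemma mat2_eta: "A \<in> carrier_mat 2 2 \<Longrightarrow> A = mat2 (A $$ (0,0)) (A $$ (0,1)) (A $$ (1,0)) (A $$ (1,1))"
  by (rule eq_matI) (auto simp: mat2_def less_2_iff)

lemma carrier_mat2_cases:
  assumes "A \<in> carrier_mat 2 2" obtains a00 a01 a10 a11 where "A = mat2 a00 a01 a10 a11"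
  using mat2_eta[OF assms] by blast

lemma mat2_mult:
  "mat2 a00 a01 a10 a11 * mat2 b00 b01 b10 b11 =
   mat2 (a00 * b00 + a01 * b10) (a00 * b01 + a01 * b11) (a10 * b00 + a11 * b10) (a10 * b01 + a11 * b11)"
  by (rule eq_matI) (auto simp: mat2_def scalar_prod_def less_Suc_eq numeral_eq_Suc sum.atLeast0_lessThan_Suc)

lemma mat2_smult: "c \<cdot>\<^sub>m mat2 a00 a01 a10 a11 = mat2 (c * a00) (c * a01) (c * a10) (c * a11)"
  by (rule eq_matI) (auto simp: mat2_def less_2_iff)

lemma mat2_conj_transpose:
  "conj_transpose (mat2 a00 a01 a10 a11) = mat2 (cnj a00) (cnj a10) (cnj a01) (cnj a11)"
  by (rule eq_matI) (auto simp: mat2_def conj_transpose_def less_2_iff)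

lemma one_mat2: "1\<^sub>m 2 = mat2 1 0 0 1"
  by (rule eq_matI) (auto simp: mat2_def less_2_iff)

definition mat4 :: "complex \<Rightarrow> complex \<Rightarrow> complex \<Rightarrow> complex \<Rightarrow> complex \<Rightarrow> complex \<Rightarrow> complex \<Rightarrow> complex \<Rightarrow>
    complex \<Rightarrow> complex \<Rightarrow> complex \<Rightarrow> complex \<Rightarrow> complex \<Rightarrow> complex \<Rightarrow> complex \<Rightarrow> complex \<Rightarrow> complex mat" where
  "mat4 a00 a01 a02 a03 a10 a11 a12 a13 a20 a21 a22 a23 a30 a31 a32 a33 =
     mat 4 4 (\<lambda>(i,j). [[a00,a01,a02,a03],[a10,a11,a12,a13],[a20,a21,a22,a23],[a30,a31,a32,a33]] ! i ! j)"

lemma mat4_carrier [simp]: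
  "mat4 a00 a01 a02 a03 a10 a11 a12 a13 a20 a21 a22 a23 a30 a31 a32 a33 \<in> carrier_mat 4 4"
  "dim_row (mat4 a00 a01 a02 a03 a10 a11 a12 a13 a20 a21 a22 a23 a30 a31 a32 a33) = 4"
  "dim_col (mat4 a00 a01 a02 a03 a10 a11 a12 a13 a20 a21 a22 a23 a30 a31 a32 a33) = 4"
  by (simp_all add: mat4_def)

lemma mat4_index [simp]:
  "mat4 a00 a01 a02 a03 a10 a11 a12 a13 a20 a21 a22 a23 a30 a31 a32 a33 $$ (0,0) = a00"
  "mat4 a00 a01 a02 a03 a10 a11 a12 a13 a20 a21 a22 a23 a30 a31 a32 a33 $$ (0,1) = a01"
  "mat4 a00 a01 a02 a03 a10 a11 a12 a13 a20 a21 a22 a23 a30 a31 a32 a33 $$ (0,2) = a02"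
  "mat4 a00 a01 a02 a03 a10 a11 a12 a13 a20 a21 a22 a23 a30 a31 a32 a33 $$ (0,3) = a03"
  "mat4 a00 a01 a02 a03 a10 a11 a12 a13 a20 a21 a22 a23 a30 a31 a32 a33 $$ (1,0) = a10"
  "mat4 a00 a01 a02 a03 a10 a11 a12 a13 a20 a21 a22 a23 a30 a31 a32 a33 $$ (1,1) = a11"
  "mat4 a00 a01 a02 a03 a10 a11 a12 a13 a20 a21 a22 a23 a30 a31 a32 a33 $$ (1,2) = a12"
  "mat4 a00 a01 a02 a03 a10 a11 a12 a13 a20 a21 a22 a23 a30 a31 a32 a33 $$ (1,3) = a13"
  "mat4 a00 a01 a02 a03 a10 a11 a12 a13 a20 a21 a22 a23 a30 a31 a32 a33 $$ (2,0) = a20"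
  "mat4 a00 a01 a02 a03 a10 a11 a12 a13 a20 a21 a22 a23 a30 a31 a32 a33 $$ (2,1) = a21"
  "mat4 a00 a01 a02 a03 a10 a11 a12 a13 a20 a21 a22 a23 a30 a31 a32 a33 $$ (2,2) = a22"
  "mat4 a00 a01 a02 a03 a10 a11 a12 a13 a20 a21 a22 a23 a30 a31 a32 a33 $$ (2,3) = a23"
  "mat4 a00 a01 a02 a03 a10 a11 a12 a13 a20 a21 a22 a23 a30 a31 a32 a33 $$ (3,0) = a30"
  "mat4 a00 a01 a02 a03 a10 a11 a12 a13 a20 a21 a22 a23 a30 a31 a32 a33 $$ (3,1) = a31"
  "mat4 a00 a01 a02 a03 a10 a11 a12 a13 a20 a21 a22 a23 a30 a31 a32 a33 $$ (3,2) = a32"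
  "mat4 a00 a01 a02 a03 a10 a11 a12 a13 a20 a21 a22 a23 a30 a31 a32 a33 $$ (3,3) = a33"
  "mat4 a00 a01 a02 a03 a10 a11 a12 a13 a20 a21 a22 a23 a30 a31 a32 a33 $$ (0,Suc 0) = a01"
  "mat4 a00 a01 a02 a03 a10 a11 a12 a13 a20 a21 a22 a23 a30 a31 a32 a33 $$ (Suc 0,0) = a10"
  "mat4 a00 a01 a02 a03 a10 a11 a12 a13 a20 a21 a22 a23 a30 a31 a32 a33 $$ (Suc 0,Suc 0) = a11"
  "mat4 a00 a01 a02 a03 a10 a11 a12 a13 a20 a21 a22 a23 a30 a31 a32 a33 $$ (Suc 0,2) = a12"
  "mat4 a00 a01 a02 a03 a10 a11 a12 a13 a20 a21 a22 a23 a30 a31 a32 a33 $$ (Suc 0,3) = a13"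
  "mat4 a00 a01 a02 a03 a10 a11 a12 a13 a20 a21 a22 a23 a30 a31 a32 a33 $$ (2,Suc 0) = a21"
  "mat4 a00 a01 a02 a03 a10 a11 a12 a13 a20 a21 a22 a23 a30 a31 a32 a33 $$ (3,Suc 0) = a31"
  by (simp_all add: mat4_def)

lemma mat4_eq_iff:
  "mat4 a00 a01 a02 a03 a10 a11 a12 a13 a20 a21 a22 a23 a30 a31 a32 a33 =
   mat4 b00 b01 b02 b03 b10 b11 b12 b13 b20 b21 b22 b23 b30 b31 b32 b33 \<longleftrightarrow>
   a00 = b00 \<and> a01 = b01 \<and> a02 = b02 \<and> a03 = b03 \<and> a10 = b10 \<and> a11 = b11 \<and> a12 = b12 \<and> a13 = b13 \<and>
   a20 = b20 \<and> a21 = b21 \<and> a22 = b22 \<and> a23 = b23 \<and> a30 = b30 \<and> a31 = b31 \<and> a32 = b32 \<and> a33 = b33"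
  by (metis mat4_index)

lemma mat4_mult:
  "mat4 a00 a01 a02 a03 a10 a11 a12 a13 a20 a21 a22 a23 a30 a31 a32 a33 *
   mat4 b00 b01 b02 b03 b10 b11 b12 b13 b20 b21 b22 b23 b30 b31 b32 b33 =
   mat4 (a00 * b00 + a01 * b10 + a02 * b20 + a03 * b30) (a00 * b01 + a01 * b11 + a02 * b21 + a03 * b31)
        (a00 * b02 + a01 * b12 + a02 * b22 + a03 * b32) (a00 * b03 + a01 * b13 + a02 * b23 + a03 * b33)
        (a10 * b00 + a11 * b10 + a12 * b20 + a13 * b30) (a10 * b01 + a11 * b11 + a12 * b21 + a13 * b31)
        (a10 * b02 + a11 * b12 + a12 * b22 + a13 * b32) (a10 * b03 + a11 * b13 + a12 * b23 + a13 * b33)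
        (a20 * b00 + a21 * b10 + a22 * b20 + a23 * b30) (a20 * b01 + a21 * b11 + a22 * b21 + a23 * b31)
        (a20 * b02 + a21 * b12 + a22 * b22 + a23 * b32) (a20 * b03 + a21 * b13 + a22 * b23 + a23 * b33)
        (a30 * b00 + a31 * b10 + a32 * b20 + a33 * b30) (a30 * b01 + a31 * b11 + a32 * b21 + a33 * b31)
        (a30 * b02 + a31 * b12 + a32 * b22 + a33 * b32) (a30 * b03 + a31 * b13 + a32 * b23 + a33 * b33)"
  by (rule eq_matI) (auto simp: mat4_def scalar_prod_def less_Suc_eq numeral_eq_Suc sum.atLeast0_lessThan_Suc)

lemma mat4_smult:
  "c \<cdot>\<^sub>m mat4 a00 a01 a02 a03 a10 a11 a12 a13 a20 a21 a22 a23 a30 a31 a32 a33 =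
   mat4 (c * a00) (c * a01) (c * a02) (c * a03) (c * a10) (c * a11) (c * a12) (c * a13)
        (c * a20) (c * a21) (c * a22) (c * a23) (c * a30) (c * a31) (c * a32) (c * a33)"
  by (rule eq_matI) (auto simp: mat4_def less_4_iff)

lemma mat4_conj_transpose:
  "conj_transpose (mat4 a00 a01 a02 a03 a10 a11 a12 a13 a20 a21 a22 a23 a30 a31 a32 a33) =
   mat4 (cnj a00) (cnj a10) (cnj a20) (cnj a30) (cnj a01) (cnj a11) (cnj a21) (cnj a31)
        (cnj a02) (cnj a12) (cnj a22) (cnj a32) (cnj a03) (cnj a13) (cnj a23) (cnj a33)"
  by (rule eq_matI) (auto simp: mat4_def conj_transpose_def less_4_iff)

lemma mat4_transpose:
  "transpose_mat (mat4 a00 a01 a02 a03 a10 a11 a12 a13 a20 a21 a22 a23 a30 a31 a32 a33) =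
   mat4 a00 a10 a20 a30 a01 a11 a21 a31 a02 a12 a22 a32 a03 a13 a23 a33"
  by (rule eq_matI) (auto simp: mat4_def less_4_iff)

lemma one_mat4: "1\<^sub>m 4 = mat4 1 0 0 0 0 1 0 0 0 0 1 0 0 0 0 1"
  by (rule eq_matI) (auto simp: mat4_def less_4_iff)

lemma mat_diag4: "mat_diag 4 d = mat4 (d 0) 0 0 0 0 (d 1) 0 0 0 0 (d 2) 0 0 0 0 (d 3)"
  by (rule eq_matI) (auto simp: mat4_def mat_diag_def less_4_iff)

lemma conj_transpose_carrier [simp]: "A \<in> carrier_mat n m \<Longrightarrow> conj_transpose A \<in> carrier_mat m n"
  by (simp add: conj_transpose_def)

lemma dim_conj_transpose [simp]:
  "dim_row (conj_transpose A) = dim_col A" "dim_col (conj_transpose A) = dim_row A"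
  by (simp_all add: conj_transpose_def)

lemma index_conj_transpose [simp]:
  "i < dim_col A \<Longrightarrow> j < dim_row A \<Longrightarrow> conj_transpose A $$ (i,j) = cnj (A $$ (j,i))"
  by (simp add: conj_transpose_def)

lemma conj_transpose_conj_transpose [simp]: "conj_transpose (conj_transpose A) = A"
  by (rule eq_matI) auto

lemma conj_transpose_one [simp]: "conj_transpose (1\<^sub>m n) = 1\<^sub>m n"
  by (rule eq_matI) auto

lemma conj_transpose_smult: "conj_transpose (c \<cdot>\<^sub>m A) = cnj c \<cdot>\<^sub>m conj_transpose A"
  by (rule eq_matI) auto

lemma conj_transpose_transpose: "conj_transpose (transpose_mat A) = transpose_mat (conj_transpose A)"
  by (rule eq_matI) auto

lemma conj_transpose_mult:
  "A \<in> carrier_mat n m \<Longrightarrow> B \<in> carrier_mat m k \<Longrightarrow>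
   conj_transpose (A * B) = conj_transpose B * conj_transpose A"
  by (rule eq_matI) (auto simp: scalar_prod_def cnj_sum mult.commute intro!: sum.cong)

lemma one_smult_mat [simp]: "(1::'a::monoid_mult) \<cdot>\<^sub>m A = A"
  by (rule eq_matI) auto

lemma smult_smult_mat: "a \<cdot>\<^sub>m (b \<cdot>\<^sub>m A) = (a * b :: 'a::semigroup_mult) \<cdot>\<^sub>m A"
  by (rule eq_matI) (auto simp: mult.assoc)

lemma index_mult_mat_sum:
  "A \<in> carrier_mat n m \<Longrightarrow> B \<in> carrier_mat m p \<Longrightarrow> i < n \<Longrightarrow> j < p \<Longrightarrow>
   (A * B) $$ (i,j) = (\<Sum>l<m. A $$ (i,l) * B $$ (l,j))"
  unfolding carrier_mat_def by (auto simp: scalar_prod_def lessThan_atLeast0)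

lemma conj_transpose_mat_diag: "conj_transpose (mat_diag n d) = mat_diag n (\<lambda>i. cnj (d i))"
  by (rule eq_matI) (auto simp: mat_diag_def)

lemma transpose_mat_diag: "transpose_mat (mat_diag n d) = mat_diag n d"
  by (rule eq_matI) (auto simp: mat_diag_def)

lemma mat_diag_cong: "(\<And>i. i < n \<Longrightarrow> f i = g i) \<Longrightarrow> mat_diag n f = mat_diag n g"
  by (auto simp: mat_diag_def intro!: eq_matI)

lemma index_mat_diag: "i < n \<Longrightarrow> mat_diag n f $$ (i,i) = f i"
  by (simp add: mat_diag_def)

definition unitary_mat :: "nat \<Rightarrow> complex mat \<Rightarrow> bool" where
  "unitary_mat n A \<longleftrightarrow> A \<in> carrier_mat n n \<and> A * conj_transpose A = 1\<^sub>m n"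

lemma unitary4_iff_unitary_mat: "unitary4 U \<longleftrightarrow> unitary_mat 4 U"
  by (simp add: unitary4_def unitary_mat_def)

lemma unitary_mat_left_inverse: "unitary_mat n A \<Longrightarrow> conj_transpose A * A = 1\<^sub>m n"
  unfolding unitary_mat_def using mat_mult_left_right_inverse[of A n "conj_transpose A"] by auto

lemma unitary_mat_conj_transpose: "unitary_mat n A \<Longrightarrow> unitary_mat n (conj_transpose A)"
  using unitary_mat_left_inverse unfolding unitary_mat_def by auto

lemma unitary_mat_mult:
  assumes "unitary_mat n A" "unitary_mat n B" shows "unitary_mat n (A * B)"
proof -
  have A: "A \<in> carrier_mat n n" "A * conj_transpose A = 1\<^sub>m n"
    and B: "B \<in> carrier_mat n n" "B * conj_transpose B = 1\<^sub>m n"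
    using assms unfolding unitary_mat_def by auto
  have "A * B * conj_transpose (A * B) = A * (B * conj_transpose B) * conj_transpose A"
    using A(1) B(1) by (simp add: conj_transpose_mult assoc_mult_mat[of _ n n _ n _ n] mult_carrier_mat[of _ n n _ n])
  also have "\<dots> = 1\<^sub>m n" using A B by simp
  finally show ?thesis using A B unfolding unitary_mat_def by simp
qed

lemma unit_modulus_cnj: "cmod z = 1 \<Longrightarrow> z * cnj z = 1"
  using complex_norm_square[of z] by simp

lemma unit_modulus_of_mult_cnj: "z * cnj z = 1 \<Longrightarrow> cmod z = 1"
proof -
  assume "z * cnj z = 1"
  hence "(cmod z)\<^sup>2 = 1" by (metis complex_norm_square of_real_eq_1_iff)
  thus ?thesis using norm_ge_zero[of z] by (auto simp: power2_eq_1_iff)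
qed

lemma unitary_mat_diag: "(\<forall>i<n. cmod (d i) = 1) \<Longrightarrow> unitary_mat n (mat_diag n d)"
  unfolding unitary_mat_def conj_transpose_mat_diag
  by (auto simp: unit_modulus_cnj intro: mat_diag_cong[where g = "\<lambda>_. 1", simplified])

lemma unitary_mat_transpose:
  assumes "unitary_mat n A" shows "unitary_mat n (transpose_mat A)"
proof -
  have A: "A \<in> carrier_mat n n" using assms unfolding unitary_mat_def by simp
  have "transpose_mat A * conj_transpose (transpose_mat A) = transpose_mat (conj_transpose A * A)"
    using A by (simp add: conj_transpose_transpose transpose_mult[of "conj_transpose A" n n A n])
  thus ?thesis using A unitary_mat_left_inverse[OF assms] unfolding unitary_mat_def by simp
qed

lemma diagonal_unitary_mat_diag:
  assumes "unitary_mat n D" "diagonal_mat D"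
  shows "D = mat_diag n (\<lambda>i. D $$ (i,i))" "\<forall>i<n. cmod (D $$ (i,i)) = 1"
proof -
  have D: "D \<in> carrier_mat n n" using assms(1) unfolding unitary_mat_def by simp
  show D_eq: "D = mat_diag n (\<lambda>i. D $$ (i,i))"
    using D assms(2) unfolding diagonal_mat_def by (auto simp: mat_diag_def intro!: eq_matI)
  have "D * conj_transpose D = mat_diag n (\<lambda>i. D $$ (i,i) * cnj (D $$ (i,i)))"
    by (subst (1 2) D_eq) (simp add: conj_transpose_mat_diag)
  hence one: "mat_diag n (\<lambda>i. D $$ (i,i) * cnj (D $$ (i,i))) = 1\<^sub>m n"
    using assms(1) unfolding unitary_mat_def by simp
  have "D $$ (i,i) * cnj (D $$ (i,i)) = 1" if "i < n" for i
    using arg_cong[OF one, of "\<lambda>A. A $$ (i,i)"] that by (simp add: index_mat_diag)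
  thus "\<forall>i<n. cmod (D $$ (i,i)) = 1" by (simp add: unit_modulus_of_mult_cnj)
qed

text \<open>Instances of the carrier-conditional matrix laws at dimension 4, so that the simplifier can
  discharge their carrier premises.\<close>

lemma mult_right_inverse_cancel:
  "A * B = 1\<^sub>m 4 \<Longrightarrow> A \<in> carrier_mat 4 4 \<Longrightarrow> B \<in> carrier_mat 4 4 \<Longrightarrow> X \<in> carrier_mat 4 4 \<Longrightarrow>
   A * (B * X) = (X :: complex mat)"
  by (metis assoc_mult_mat left_mult_one_mat)

lemmas mat4_simps = mult_carrier_mat[of _ 4 4 _ 4] assoc_mult_mat[of _ 4 4 _ 4 _ 4]
  left_mult_one_mat[of _ 4 4] right_mult_one_mat[of _ 4 4] transpose_mult[of _ 4 4 _ 4]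
  conj_transpose_mult[of _ 4 4 _ 4] mult_smult_assoc_mat[of _ 4 4 _ 4] mult_smult_distrib[of _ 4 4 _ 4]
  smult_smult_mat mult_right_inverse_cancel

definition real_orthogonal :: "nat \<Rightarrow> complex mat \<Rightarrow> bool" where
  "real_orthogonal n Q \<longleftrightarrow>
     Q \<in> carrier_mat n n \<and> transpose_mat Q * Q = 1\<^sub>m n \<and> conj_transpose Q = transpose_mat Q"

lemma real_orthogonal_right_inverse: "real_orthogonal n Q \<Longrightarrow> Q * transpose_mat Q = 1\<^sub>m n"
  unfolding real_orthogonal_def using mat_mult_left_right_inverse[of "transpose_mat Q" n Q] by auto

lemma real_orthogonal_unitary: "real_orthogonal n Q \<Longrightarrow> unitary_mat n Q"
  using real_orthogonal_right_inverse unfolding real_orthogonal_def unitary_mat_def by auto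

lemma real_orthogonal_mult:
  assumes "real_orthogonal n P" "real_orthogonal n Q" shows "real_orthogonal n (P * Q)"
proof -
  have P: "P \<in> carrier_mat n n" "transpose_mat P * P = 1\<^sub>m n" "conj_transpose P = transpose_mat P"
    and Q: "Q \<in> carrier_mat n n" "transpose_mat Q * Q = 1\<^sub>m n" "conj_transpose Q = transpose_mat Q"
    using assms unfolding real_orthogonal_def by auto
  have "transpose_mat (P * Q) * (P * Q) = transpose_mat Q * (transpose_mat P * P) * Q"
    using P(1) Q(1) by (simp add: transpose_mult assoc_mult_mat[of _ n n _ n _ n] mult_carrier_mat[of _ n n _ n])
  also have "\<dots> = 1\<^sub>m n" using P Q by simp
  finally show ?thesis
    using P Q unfolding real_orthogonal_def by (simp add: conj_transpose_mult transpose_mult)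
qed

lemma real_orthogonal_transpose: "real_orthogonal n Q \<Longrightarrow> real_orthogonal n (transpose_mat Q)"
  using real_orthogonal_right_inverse unfolding real_orthogonal_def
  by (auto simp: conj_transpose_transpose)

lemma unitary_real_orthogonal:
  assumes "unitary_mat n W" "transpose_mat W * W = 1\<^sub>m n"
  shows "real_orthogonal n W"
proof -
  have W: "W \<in> carrier_mat n n" "W * conj_transpose W = 1\<^sub>m n" using assms(1) unfolding unitary_mat_def by auto
  have "conj_transpose W = transpose_mat W * W * conj_transpose W" using W(1) assms(2) by simp
  also have "\<dots> = transpose_mat W" using W by (simp add: assoc_mult_mat[of _ n n _ n _ n])
  finally show ?thesis using W(1) assms(2) unfolding real_orthogonal_def by simp
qed

section \<open>One-qubit gates, local unitaries and circuits\<close>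

lemma kron2_carrier [simp]:
  "kron2 A B \<in> carrier_mat 4 4" "dim_row (kron2 A B) = 4" "dim_col (kron2 A B) = 4"
  by (simp_all add: kron2_def)

lemma kron2_mat2:
  "kron2 (mat2 a00 a01 a10 a11) (mat2 b00 b01 b10 b11) =
   mat4 (a00 * b00) (a00 * b01) (a01 * b00) (a01 * b01) (a00 * b10) (a00 * b11) (a01 * b10) (a01 * b11)
        (a10 * b00) (a10 * b01) (a11 * b00) (a11 * b01) (a10 * b10) (a10 * b11) (a11 * b10) (a11 * b11)"
  by (rule eq_matI) (auto simp: kron2_def mat4_def mat2_def less_4_iff)

lemma kron2_mult:
  assumes "A \<in> carrier_mat 2 2" "B \<in> carrier_mat 2 2" "C \<in> carrier_mat 2 2" "D \<in> carrier_mat 2 2"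
  shows "kron2 A B * kron2 C D = kron2 (A * C) (B * D)"
  using assms
  by (elim carrier_mat2_cases) (simp add: kron2_mat2 mat2_mult mat4_mult mat4_eq_iff algebra_simps)

lemma kron2_smult_left:
  assumes "A \<in> carrier_mat 2 2" "B \<in> carrier_mat 2 2"
  shows "kron2 (c \<cdot>\<^sub>m A) B = c \<cdot>\<^sub>m kron2 A B"
  using assms by (elim carrier_mat2_cases) (simp add: mat2_smult kron2_mat2 mat4_smult algebra_simps)

lemma kron2_smult_right:
  assumes "A \<in> carrier_mat 2 2" "B \<in> carrier_mat 2 2"
  shows "kron2 A (c \<cdot>\<^sub>m B) = c \<cdot>\<^sub>m kron2 A B"
  using assms by (elim carrier_mat2_cases) (simp add: mat2_smult kron2_mat2 mat4_smult algebra_simps)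

lemma kron2_conj_transpose:
  assumes "A \<in> carrier_mat 2 2" "B \<in> carrier_mat 2 2"
  shows "conj_transpose (kron2 A B) = kron2 (conj_transpose A) (conj_transpose B)"
  using assms by (elim carrier_mat2_cases) (simp add: mat2_conj_transpose kron2_mat2 mat4_conj_transpose)

lemma id2_mat2: "id2 = mat2 1 0 0 1"
  by (simp add: id2_def one_mat2)

lemma id2_carrier [simp]: "id2 \<in> carrier_mat 2 2"
  by (simp add: id2_def)

lemma kron2_split:
  assumes "A \<in> carrier_mat 2 2" "B \<in> carrier_mat 2 2"
  shows "kron2 A B = kron2 A id2 * kron2 id2 B"
  using assms by (simp add: kron2_mult id2_def)

definition local_unitary :: "complex mat \<Rightarrow> bool" where
  "local_unitary X \<longleftrightarrow> (\<exists>A B. unitary_mat 2 A \<and> unitary_mat 2 B \<and> X = kron2 A B)"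

lemma local_unitary_mult:
  assumes "local_unitary X" "local_unitary Y" shows "local_unitary (X * Y)"
proof -
  obtain A B C D where u: "unitary_mat 2 A" "unitary_mat 2 B" "unitary_mat 2 C" "unitary_mat 2 D"
    and XY: "X = kron2 A B" "Y = kron2 C D"
    using assms unfolding local_unitary_def by blast
  have "X * Y = kron2 (A * C) (B * D)" using u unfolding XY by (simp add: kron2_mult unitary_mat_def)
  thus ?thesis using u unfolding local_unitary_def by (blast intro: unitary_mat_mult)
qed

lemma local_unitary_conj_transpose:
  assumes "local_unitary X" shows "local_unitary (conj_transpose X)"
proof -
  obtain A B where u: "unitary_mat 2 A" "unitary_mat 2 B" and X: "X = kron2 A B"
    using assms unfolding local_unitary_def by blast
  have "conj_transpose X = kron2 (conj_transpose A) (conj_transpose B)"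
    using u unfolding X by (simp add: kron2_conj_transpose unitary_mat_def)
  thus ?thesis using u unfolding local_unitary_def by (blast intro: unitary_mat_conj_transpose)
qed

lemma local_unitary_kron2: "unitary_mat 2 A \<Longrightarrow> unitary_mat 2 B \<Longrightarrow> local_unitary (kron2 A B)"
  unfolding local_unitary_def by blast

lemma Ry_mat2: "Ry t = mat2 (cos (t/2)) (sin (t/2)) (- sin (t/2)) (cos (t/2))"
  by (rule eq_matI) (auto simp: Ry_def mat2_def mat_of_rows_list_def less_2_iff)

lemma Rz_mat2: "Rz t = mat2 (cis (-(t/2))) 0 0 (cis (t/2))"
  by (rule eq_matI) (auto simp: Rz_def mat2_def mat_of_rows_list_def less_2_iff cis_conv_exp)

lemma Ry_carrier [simp]: "Ry t \<in> carrier_mat 2 2"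
  by (simp add: Ry_mat2)

lemma Rz_carrier [simp]: "Rz t \<in> carrier_mat 2 2"
  by (simp add: Rz_mat2)

lemma CNOT1_mat4: "CNOT1 = mat4 1 0 0 0  0 1 0 0  0 0 0 1  0 0 1 0"
  by (rule eq_matI) (auto simp: CNOT1_def perm4_def mat4_def less_4_iff Fun.swap_def)

lemma CNOT2_mat4: "CNOT2 = mat4 1 0 0 0  0 0 0 1  0 0 1 0  0 1 0 0"
  by (rule eq_matI) (auto simp: CNOT2_def perm4_def mat4_def less_4_iff Fun.swap_def)

lemma unitary_Ry: "unitary_mat 2 (Ry t)"
proof -
  have "complex_of_real (cos x) * cos x + complex_of_real (sin x) * sin x = 1" for x
    by (metis of_real_add of_real_mult of_real_1 sin_cos_squared_add3)
  thus ?thesis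
    by (simp add: unitary_mat_def Ry_mat2 mat2_conj_transpose mat2_mult one_mat2 mat2_eq_iff add.commute)
qed

lemma unitary_Rz: "unitary_mat 2 (Rz t)"
  by (simp add: unitary_mat_def Rz_mat2 mat2_conj_transpose mat2_mult one_mat2 mat2_eq_iff cis_cnj cis_mult)

lemma unitary_mat2_cases:
  assumes "unitary_mat 2 A"
  obtains p q \<delta> where "A = mat2 p q (- \<delta> * cnj q) (\<delta> * cnj p)" "cmod \<delta> = 1" "p * cnj p + q * cnj q = 1"
proof -
  obtain p q r s where A: "A = mat2 p q r s"
    using assms unfolding unitary_mat_def by (auto elim: carrier_mat2_cases)
  have "mat2 p q r s * conj_transpose (mat2 p q r s) = mat2 1 0 0 1"
    using assms unfolding unitary_mat_def A one_mat2 by simp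
  hence pq: "p * cnj p + q * cnj q = 1" and pr: "p * cnj r + q * cnj s = 0"
    and rs: "r * cnj r + s * cnj s = 1"
    unfolding mat2_conj_transpose mat2_mult mat2_eq_iff by auto
  have rp: "cnj p * r + cnj q * s = 0" using arg_cong[OF pr, of cnj] by simp
  define \<delta> where "\<delta> = p * s - q * r"
  \<comment> \<open>Cramer's rule for the second row, which is orthogonal to the first\<close>
  have "\<delta> * cnj p = s * (p * cnj p + q * cnj q) - q * (cnj p * r + cnj q * s)"
    unfolding \<delta>_def by (simp add: algebra_simps)
  hence s: "s = \<delta> * cnj p" using pq rp by simp
  have "- \<delta> * cnj q = r * (p * cnj p + q * cnj q) - p * (cnj p * r + cnj q * s)"
    unfolding \<delta>_def by (simp add: algebra_simps)
  hence r: "r = - \<delta> * cnj q" using pq rp by simp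
  have "r * cnj r + s * cnj s = \<delta> * cnj \<delta> * (p * cnj p + q * cnj q)"
    unfolding s r by (simp add: algebra_simps)
  hence "cmod \<delta> = 1" using pq rs by (simp add: unit_modulus_of_mult_cnj)
  with that show ?thesis using A pq unfolding r s by blast
qed

lemma unit_pair_polar:
  assumes pq: "p * cnj p + q * cnj q = 1" and c: "cmod c = 1"
  obtains x y b where "p = c * (cis x * complex_of_real (cos (b/2)))" "q = c * (cis y * complex_of_real (sin (b/2)))"
proof -
  have c0: "c \<noteq> 0" using c by auto
  have "complex_of_real ((cmod p)\<^sup>2 + (cmod q)\<^sup>2) = 1"
    using pq by (simp only: of_real_add complex_norm_square)
  hence pq_norm: "(cmod p)\<^sup>2 + (cmod q)\<^sup>2 = 1" by (simp only: of_real_eq_1_iff)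
  have "(cmod p)\<^sup>2 \<le> 1\<^sup>2" using pq_norm zero_le_power2[of "cmod q"] unfolding one_power2 by linarith
  hence p_le: "cmod p \<le> 1" by (rule power2_le_imp_le) simp
  define b where "b = 2 * arccos (cmod p)"
  have cos_b: "cos (b/2) = cmod p" unfolding b_def using p_le by (simp add: cos_arccos_abs)
  have "1 - (cmod p)\<^sup>2 = (cmod q)\<^sup>2" using pq_norm by simp
  hence sin_b: "sin (b/2) = cmod q" unfolding b_def using p_le by (simp add: sin_arccos_abs)
  have "p / c = cmod p * cis (Arg (p / c))" "q / c = cmod q * cis (Arg (q / c))"
    using rcis_cmod_Arg[of "p / c"] rcis_cmod_Arg[of "q / c"] c
    unfolding rcis_def by (simp_all add: norm_divide)
  hence "p = c * (cis (Arg (p / c)) * cos (b/2))" "q = c * (cis (Arg (q / c)) * sin (b/2))"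
    unfolding cos_b sin_b using c0 by (simp_all add: field_simps)
  thus ?thesis by (rule that)
qed

lemma mat2_euler_zyz:
  assumes \<delta>: "cmod \<delta> = 1" and pq: "p * cnj p + q * cnj q = 1"
  shows "\<exists>c a b d. cmod c = 1 \<and> mat2 p q (- \<delta> * cnj q) (\<delta> * cnj p) = c \<cdot>\<^sub>m (Rz a * Ry b * Rz d)"
proof -
  define c where "c = csqrt \<delta>"
  have cc: "c * c = \<delta>" unfolding c_def using power2_csqrt[of \<delta>] by (simp add: power2_eq_square)
  have c: "cmod c = 1" unfolding c_def using \<delta> by simp
  hence "c \<noteq> 0" by auto
  hence cnj_c: "cnj c = 1 / c" using unit_modulus_cnj[OF c] by (simp add: field_simps)
  obtain x y b where p: "p = c * (cis x * complex_of_real (cos (b/2)))"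
    and q: "q = c * (cis y * complex_of_real (sin (b/2)))"
    using unit_pair_polar[OF pq c] .
  define a where "a = -(x + y)"
  define d where "d = y - x"
  have "Rz a * Ry b * Rz d =
      mat2 (cis (-(a/2)) * cis (-(d/2)) * cos (b/2)) (cis (-(a/2)) * cis (d/2) * sin (b/2))
           (- (cis (a/2) * cis (-(d/2)) * sin (b/2))) (cis (a/2) * cis (d/2) * cos (b/2))"
    unfolding Rz_mat2 Ry_mat2 mat2_mult by (simp add: algebra_simps)
  also have "\<dots> =
      mat2 (cis x * cos (b/2)) (cis y * sin (b/2)) (- (cis (-y) * sin (b/2))) (cis (-x) * cos (b/2))"
    unfolding cis_mult a_def d_def by (simp add: field_simps)
  finally have ZYZ: "c \<cdot>\<^sub>m (Rz a * Ry b * Rz d) =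
      mat2 (c * (cis x * cos (b/2))) (c * (cis y * sin (b/2)))
           (c * (- (cis (-y) * sin (b/2)))) (c * (cis (-x) * cos (b/2)))"
    by (simp add: mat2_smult)
  have "- \<delta> * cnj q = c * (- (cis (-y) * sin (b/2)))" "\<delta> * cnj p = c * (cis (-x) * cos (b/2))"
    unfolding p q cc[symmetric] using c by (simp_all add: cis_cnj cnj_c)
  hence "mat2 p q (- \<delta> * cnj q) (\<delta> * cnj p) = c \<cdot>\<^sub>m (Rz a * Ry b * Rz d)"
    unfolding ZYZ by (simp flip: p q)
  thus ?thesis using c by blast
qed

lemma unitary_mat2_euler_zyz:
  assumes "unitary_mat 2 A" shows "\<exists>c a b d. cmod c = 1 \<and> A = c \<cdot>\<^sub>m (Rz a * Ry b * Rz d)"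
  using assms by (elim unitary_mat2_cases) (simp only: mat2_euler_zyz)

lemma elementary_gate_carrier: "g \<in> elementary_gates \<Longrightarrow> g \<in> carrier_mat 4 4"
  by (auto simp: elementary_gates_def cnot_gates_def CNOT1_mat4 CNOT2_mat4)

lemma foldl_gates_carrier:
  "set gs \<subseteq> elementary_gates \<Longrightarrow> A \<in> carrier_mat 4 4 \<Longrightarrow> foldl (\<lambda>acc g. g * acc) A gs \<in> carrier_mat 4 4"
  by (induction gs arbitrary: A) (auto dest: elementary_gate_carrier)

lemma circuit_matrix_carrier: "set gs \<subseteq> elementary_gates \<Longrightarrow> circuit_matrix gs \<in> carrier_mat 4 4"
  unfolding circuit_matrix_def by (simp add: foldl_gates_carrier)

lemma foldl_gates_mult:
  "set gs \<subseteq> elementary_gates \<Longrightarrow> A \<in> carrier_mat 4 4 \<Longrightarrow>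
   foldl (\<lambda>acc g. g * acc) A gs = circuit_matrix gs * A"
proof (induction gs arbitrary: A)
  case Nil
  thus ?case by (simp add: circuit_matrix_def)
next
  case (Cons g gs)
  have g: "g \<in> carrier_mat 4 4" and gs: "set gs \<subseteq> elementary_gates"
    using Cons.prems by (auto dest: elementary_gate_carrier)
  have "circuit_matrix (g # gs) = circuit_matrix gs * g"
    using Cons.IH[OF gs, of "g * 1\<^sub>m 4"] g by (simp add: circuit_matrix_def)
  thus ?case using Cons.IH[OF gs, of "g * A"] g Cons.prems(2) circuit_matrix_carrier[OF gs] by simp
qed

lemma circuit_matrix_append:
  assumes "set gs1 \<subseteq> elementary_gates" "set gs2 \<subseteq> elementary_gates"
  shows "circuit_matrix (gs1 @ gs2) = circuit_matrix gs2 * circuit_matrix gs1"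
proof -
  have "circuit_matrix (gs1 @ gs2) = foldl (\<lambda>acc g. g * acc) (circuit_matrix gs1) gs2"
    by (simp add: circuit_matrix_def)
  also have "\<dots> = circuit_matrix gs2 * circuit_matrix gs1"
    using assms by (simp add: foldl_gates_mult circuit_matrix_carrier)
  finally show ?thesis .
qed

definition realizes :: "complex mat \<Rightarrow> complex mat list \<Rightarrow> bool" where
  "realizes V gs \<longleftrightarrow> set gs \<subseteq> elementary_gates \<and> (\<exists>c. cmod c = 1 \<and> V = c \<cdot>\<^sub>m circuit_matrix gs)"

definition cnot_count :: "complex mat list \<Rightarrow> nat" where
  "cnot_count gs = length (filter (\<lambda>g. g \<in> cnot_gates) gs)"

lemma realizes_append:
  assumes "realizes V1 gs1" "realizes V2 gs2" shows "realizes (V2 * V1) (gs1 @ gs2)"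
proof -
  obtain c1 c2 where c: "cmod c1 = 1" "cmod c2 = 1"
    and V: "V1 = c1 \<cdot>\<^sub>m circuit_matrix gs1" "V2 = c2 \<cdot>\<^sub>m circuit_matrix gs2"
    and gs: "set gs1 \<subseteq> elementary_gates" "set gs2 \<subseteq> elementary_gates"
    using assms unfolding realizes_def by auto
  have "V2 * V1 = (c2 * c1) \<cdot>\<^sub>m circuit_matrix (gs1 @ gs2)"
    using circuit_matrix_carrier[OF gs(1)] circuit_matrix_carrier[OF gs(2)]
    unfolding V circuit_matrix_append[OF gs]
    by (simp add: mult_smult_assoc_mat[of _ 4 4 _ 4] mult_smult_distrib[of _ 4 4 _ 4] smult_smult_mat
        mult.commute)
  moreover have "cmod (c2 * c1) = 1" using c by (simp add: norm_mult)
  ultimately show ?thesis using gs unfolding realizes_def by auto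
qed

lemma realizes_phase: "realizes V gs \<Longrightarrow> cmod d = 1 \<Longrightarrow> realizes (d \<cdot>\<^sub>m V) gs"
  unfolding realizes_def by (metis norm_mult mult_1 smult_smult_mat)

lemma realizes_gate: "g \<in> elementary_gates \<Longrightarrow> realizes g [g]"
  unfolding realizes_def circuit_matrix_def
  by (auto intro!: exI[of _ 1] dest: elementary_gate_carrier)

lemma rotation_4pi_periodic:
  "Ry (t + 4 * pi * of_int k) = Ry t" "Rz (t + 4 * pi * of_int k) = Rz t"
proof -
  have h: "(t + 4 * pi * of_int k) / 2 = t/2 + 2 * pi * of_int k" by simp
  show "Ry (t + 4 * pi * of_int k) = Ry t" "Rz (t + 4 * pi * of_int k) = Rz t"
    unfolding Ry_mat2 Rz_mat2 h by (simp_all add: mat2_eq_iff complex_eq_iff cos_add sin_add cos_diff sin_diff)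
qed

lemma rotation_2pi_antiperiodic:
  "Ry (t + 2 * pi) = (-1) \<cdot>\<^sub>m Ry t" "Rz (t + 2 * pi) = (-1) \<cdot>\<^sub>m Rz t"
proof -
  have h: "(t + 2 * pi) / 2 = t/2 + pi" by simp
  show "Ry (t + 2 * pi) = (-1) \<cdot>\<^sub>m Ry t" "Rz (t + 2 * pi) = (-1) \<cdot>\<^sub>m Rz t"
    unfolding Ry_mat2 Rz_mat2 mat2_smult h by (simp_all add: mat2_eq_iff complex_eq_iff)
qed

lemma rotation_angle_normalize:
  "\<exists>t' s. 0 \<le> t' \<and> t' < 2 * pi \<and> (s = 1 \<or> s = -1) \<and> Ry t = s \<cdot>\<^sub>m Ry t' \<and> Rz t = s \<cdot>\<^sub>m Rz t'"
proof -
  define k where "k = \<lfloor>t / (4 * pi)\<rfloor>"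
  define t1 where "t1 = t - 4 * pi * of_int k"
  have "of_int k \<le> t / (4 * pi)" "t / (4 * pi) < of_int k + 1"
    unfolding k_def by linarith+
  hence t1: "0 \<le> t1" "t1 < 4 * pi" unfolding t1_def using pi_gt_zero by (auto simp: field_simps)
  have R1: "Ry t = Ry t1" "Rz t = Rz t1"
    using rotation_4pi_periodic[of t1 k] unfolding t1_def by simp_all
  show ?thesis
  proof (cases "t1 < 2 * pi")
    case True
    thus ?thesis using R1 t1 by (intro exI[of _ t1] exI[of _ 1]) auto
  next
    case False
    have "Ry t1 = (-1) \<cdot>\<^sub>m Ry (t1 - 2 * pi)" "Rz t1 = (-1) \<cdot>\<^sub>m Rz (t1 - 2 * pi)"
      using rotation_2pi_antiperiodic[of "t1 - 2 * pi"] by simp_all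
    thus ?thesis using R1 t1 False by (intro exI[of _ "t1 - 2 * pi"] exI[of _ "-1"]) auto
  qed
qed

lemma rotation_gate_not_cnot:
  "kron2 (Ry t) id2 \<notin> cnot_gates" "kron2 id2 (Ry t) \<notin> cnot_gates"
  "kron2 (Rz t) id2 \<notin> cnot_gates" "kron2 id2 (Rz t) \<notin> cnot_gates"
proof -
  have "\<not> (cos (t/2) = 0 \<and> sin (t/2) = 0)"
  proof
    assume "cos (t/2) = 0 \<and> sin (t/2) = 0"
    thus False using sin_cos_squared_add[of "t/2"] by simp
  qed
  thus "kron2 (Ry t) id2 \<notin> cnot_gates" "kron2 id2 (Ry t) \<notin> cnot_gates"
    "kron2 (Rz t) id2 \<notin> cnot_gates" "kron2 id2 (Rz t) \<notin> cnot_gates"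
    unfolding cnot_gates_def CNOT1_mat4 CNOT2_mat4 Ry_mat2 Rz_mat2 id2_mat2 kron2_mat2
    by (auto simp: mat4_eq_iff)
qed

lemma realizes_rotation_gate:
  "\<exists>g. realizes (kron2 (Ry t) id2) [g] \<and> g \<notin> cnot_gates"
  "\<exists>g. realizes (kron2 id2 (Ry t)) [g] \<and> g \<notin> cnot_gates"
  "\<exists>g. realizes (kron2 (Rz t) id2) [g] \<and> g \<notin> cnot_gates"
  "\<exists>g. realizes (kron2 id2 (Rz t)) [g] \<and> g \<notin> cnot_gates"
proof -
  obtain t' s where t': "0 \<le> t'" "t' < 2 * pi" and "s = 1 \<or> s = -1"
    and R: "Ry t = s \<cdot>\<^sub>m Ry t'" "Rz t = s \<cdot>\<^sub>m Rz t'"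
    using rotation_angle_normalize[of t] by blast
  hence s: "cmod s = 1" by auto
  have "kron2 (Ry t') id2 \<in> elementary_gates" "kron2 id2 (Ry t') \<in> elementary_gates"
    "kron2 (Rz t') id2 \<in> elementary_gates" "kron2 id2 (Rz t') \<in> elementary_gates"
    unfolding elementary_gates_def using t' by blast+
  note gates = realizes_phase[OF realizes_gate[OF this(1)] s] realizes_phase[OF realizes_gate[OF this(2)] s]
    realizes_phase[OF realizes_gate[OF this(3)] s] realizes_phase[OF realizes_gate[OF this(4)] s]
  show "\<exists>g. realizes (kron2 (Ry t) id2) [g] \<and> g \<notin> cnot_gates"
    "\<exists>g. realizes (kron2 id2 (Ry t)) [g] \<and> g \<notin> cnot_gates"
    "\<exists>g. realizes (kron2 (Rz t) id2) [g] \<and> g \<notin> cnot_gates"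
    "\<exists>g. realizes (kron2 id2 (Rz t)) [g] \<and> g \<notin> cnot_gates"
    using gates rotation_gate_not_cnot unfolding R
    by (auto simp: kron2_smult_left kron2_smult_right)
qed

lemma realizes_one_qubit_embedding:
  fixes emb :: "complex mat \<Rightarrow> complex mat"
  assumes mult: "\<And>X Y. X \<in> carrier_mat 2 2 \<Longrightarrow> Y \<in> carrier_mat 2 2 \<Longrightarrow> emb (X * Y) = emb X * emb Y"
    and smult: "\<And>c X. X \<in> carrier_mat 2 2 \<Longrightarrow> emb (c \<cdot>\<^sub>m X) = c \<cdot>\<^sub>m emb X"
    and Ry: "\<And>t. \<exists>g. realizes (emb (Ry t)) [g] \<and> g \<notin> cnot_gates"
    and Rz: "\<And>t. \<exists>g. realizes (emb (Rz t)) [g] \<and> g \<notin> cnot_gates"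
    and A: "unitary_mat 2 A"
  shows "\<exists>gs. realizes (emb A) gs \<and> length gs = 3 \<and> cnot_count gs = 0"
proof -
  obtain c a b d where c: "cmod c = 1" and A: "A = c \<cdot>\<^sub>m (Rz a * Ry b * Rz d)"
    using unitary_mat2_euler_zyz[OF A] by blast
  have emb_A: "emb A = c \<cdot>\<^sub>m (emb (Rz a) * (emb (Ry b) * emb (Rz d)))"
    unfolding A by (simp add: smult mult assoc_mult_mat[of _ 2 2 _ 2 _ 2] mult_carrier_mat[of _ 2 2 _ 2])
  obtain ga where ga: "realizes (emb (Rz a)) [ga]" "ga \<notin> cnot_gates" using Rz by blast
  obtain gb where gb: "realizes (emb (Ry b)) [gb]" "gb \<notin> cnot_gates" using Ry by blast
  obtain gd where gd: "realizes (emb (Rz d)) [gd]" "gd \<notin> cnot_gates" using Rz by blast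
  have "realizes (emb A) (([gd] @ [gb]) @ [ga])"
    unfolding emb_A by (intro realizes_phase[OF _ c] realizes_append ga gb gd)
  thus ?thesis using ga gb gd by (intro exI[of _ "([gd] @ [gb]) @ [ga]"]) (simp add: cnot_count_def)
qed

lemma realizes_local_unitary:
  assumes "local_unitary X" shows "\<exists>gs. realizes X gs \<and> length gs = 6 \<and> cnot_count gs = 0"
proof -
  obtain A B where u: "unitary_mat 2 A" "unitary_mat 2 B" and X: "X = kron2 A B"
    using assms unfolding local_unitary_def by blast
  have id2_id2: "id2 * id2 = id2" by (simp add: id2_def)
  have left: "\<exists>gs. realizes (kron2 A id2) gs \<and> length gs = 3 \<and> cnot_count gs = 0"
  proof (rule realizes_one_qubit_embedding[where emb = "\<lambda>P. kron2 P id2"])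
    fix P Q :: "complex mat" assume "P \<in> carrier_mat 2 2" "Q \<in> carrier_mat 2 2"
    thus "kron2 (P * Q) id2 = kron2 P id2 * kron2 Q id2" by (simp add: kron2_mult id2_id2)
  qed (simp_all add: kron2_smult_left realizes_rotation_gate u(1))
  have right: "\<exists>gs. realizes (kron2 id2 B) gs \<and> length gs = 3 \<and> cnot_count gs = 0"
  proof (rule realizes_one_qubit_embedding[where emb = "\<lambda>P. kron2 id2 P"])
    fix P Q :: "complex mat" assume "P \<in> carrier_mat 2 2" "Q \<in> carrier_mat 2 2"
    thus "kron2 id2 (P * Q) = kron2 id2 P * kron2 id2 Q" by (simp add: kron2_mult id2_id2)
  qed (simp_all add: kron2_smult_right realizes_rotation_gate u(2))
  obtain gs1 gs2 where gs: "realizes (kron2 A id2) gs1" "length gs1 = 3" "cnot_count gs1 = 0"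
    "realizes (kron2 id2 B) gs2" "length gs2 = 3" "cnot_count gs2 = 0"
    using left right by blast
  have "X = kron2 A id2 * kron2 id2 B"
    using u unfolding X unitary_mat_def by (auto intro: kron2_split)
  hence "realizes X (gs2 @ gs1)" using realizes_append[OF gs(4) gs(1)] by simp
  thus ?thesis using gs by (intro exI[of _ "gs2 @ gs1"]) (simp add: cnot_count_def)
qed

section \<open>The magic basis\<close>

definition half_sqrt2 :: complex where
  "half_sqrt2 = complex_of_real (sqrt 2 / 2)"

lemma half_sqrt2_squared: "half_sqrt2 * half_sqrt2 = 1/2" "half_sqrt2 * (half_sqrt2 * x) = x/2"
proof -
  have "half_sqrt2 * half_sqrt2 = complex_of_real (sqrt 2 / 2 * (sqrt 2 / 2))"
    unfolding half_sqrt2_def by (simp only: of_real_mult)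
  thus "half_sqrt2 * half_sqrt2 = 1/2" by simp
  thus "half_sqrt2 * (half_sqrt2 * x) = x/2" by (simp flip: mult.assoc)
qed

lemma cnj_half_sqrt2 [simp]: "cnj half_sqrt2 = half_sqrt2"
  by (simp add: half_sqrt2_def)

definition magic_unscaled :: "complex mat" where
  "magic_unscaled = mat4 1 \<i> 0 0  0 0 \<i> 1  0 0 \<i> (-1)  1 (-\<i>) 0 0"

definition magic :: "complex mat" where
  "magic = half_sqrt2 \<cdot>\<^sub>m magic_unscaled"

lemma magic_carrier [simp]: "magic \<in> carrier_mat 4 4" "magic_unscaled \<in> carrier_mat 4 4"
  by (simp_all add: magic_def magic_unscaled_def)

lemma magic_conj:
  assumes "X \<in> carrier_mat 4 4"
  shows "magic * X * conj_transpose magic = (1/2) \<cdot>\<^sub>m (magic_unscaled * X * conj_transpose magic_unscaled)"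
  using assms
  by (simp add: magic_def conj_transpose_smult mult_smult_assoc_mat[of _ 4 4 _ 4]
      mult_smult_distrib[of _ 4 4 _ 4] mult_carrier_mat[of _ 4 4 _ 4] smult_smult_mat half_sqrt2_squared)

lemma unitary_magic: "unitary_mat 4 magic"
proof -
  have "magic * conj_transpose magic = magic * 1\<^sub>m 4 * conj_transpose magic"
    using right_mult_one_mat[OF magic_carrier(1)] by simp
  also have "\<dots> = 1\<^sub>m 4"
    unfolding magic_conj[OF one_carrier_mat] unfolding magic_unscaled_def one_mat4 mat4_conj_transpose mat4_mult
      mat4_smult by (simp add: mat4_eq_iff)
  finally show ?thesis unfolding unitary_mat_def by simp
qed

definition givens :: "nat \<Rightarrow> real \<Rightarrow> complex mat" where
  "givens k t = mat 4 4 (\<lambda>(i,j).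
     if i = j then (if i = k \<or> i = k + 1 then complex_of_real (cos t) else 1)
     else if i = k + 1 \<and> j = k then complex_of_real (sin t)
     else if i = k \<and> j = k + 1 then - complex_of_real (sin t) else 0)"

lemma givens_mat4:
  "givens 0 t = mat4 (cos t) (- sin t) 0 0  (sin t) (cos t) 0 0  0 0 1 0  0 0 0 1"
  "givens 1 t = mat4 1 0 0 0  0 (cos t) (- sin t) 0  0 (sin t) (cos t) 0  0 0 0 1"
  "givens 2 t = mat4 1 0 0 0  0 1 0 0  0 0 (cos t) (- sin t)  0 0 (sin t) (cos t)"
  by (auto intro!: eq_matI simp: givens_def mat4_def less_4_iff)

lemma givens_carrier [simp]: "givens k t \<in> carrier_mat 4 4"
  by (simp add: givens_def)

lemma magic_conj_givens:
  "magic * givens 0 t * conj_transpose magic = kron2 (Rz (-t)) (Rz (-t))"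
  "magic * givens 1 t * conj_transpose magic = kron2 (Ry (-t)) (Ry (-t))"
  "magic * givens 2 t * conj_transpose magic = kron2 (Rz t) (Rz (-t))"
proof -
  have double: "cos t = cos (t/2) * cos (t/2) - sin (t/2) * sin (t/2)" "sin t = 2 * sin (t/2) * cos (t/2)"
    using cos_double[of "t/2"] sin_double[of "t/2"] by (simp_all add: power2_eq_square)
  show "magic * givens 0 t * conj_transpose magic = kron2 (Rz (-t)) (Rz (-t))"
    "magic * givens 2 t * conj_transpose magic = kron2 (Rz t) (Rz (-t))"
    unfolding magic_conj[OF givens_carrier] unfolding givens_mat4 magic_unscaled_def Rz_mat2 kron2_mat2 mat4_mult
      mat4_conj_transpose mat4_smult
    by (simp_all add: mat4_eq_iff cis_mult) (simp_all add: complex_eq_iff algebra_simps)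
  show "magic * givens 1 t * conj_transpose magic = kron2 (Ry (-t)) (Ry (-t))"
    unfolding magic_conj[OF givens_carrier] unfolding givens_mat4 magic_unscaled_def Ry_mat2 kron2_mat2 mat4_mult
      mat4_conj_transpose mat4_smult double
    by (simp add: mat4_eq_iff) (simp add: complex_eq_iff algebra_simps)
qed

lemma real_orthogonal_givens: "k < 3 \<Longrightarrow> real_orthogonal 4 (givens k t)"
proof -
  have "complex_of_real (cos t) * cos t + complex_of_real (sin t) * sin t = 1"
    by (metis of_real_add of_real_mult of_real_1 sin_cos_squared_add3)
  hence "real_orthogonal 4 (givens 0 t)" "real_orthogonal 4 (givens 1 t)" "real_orthogonal 4 (givens 2 t)"
    unfolding real_orthogonal_def givens_mat4 mat4_transpose mat4_conj_transpose mat4_mult one_mat4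
    by (simp_all add: mat4_eq_iff add.commute)
  thus "k < 3 \<Longrightarrow> real_orthogonal 4 (givens k t)" by (elim less_3_cases[elim_format] disjE) simp_all
qed

text \<open>Magic-local matrices are in fact all of \<open>SO(4)\<close>; closure under products and transposition
  together with the Givens rotations is all that is used.\<close>

definition magic_local :: "complex mat \<Rightarrow> bool" where
  "magic_local Q \<longleftrightarrow> real_orthogonal 4 Q \<and> local_unitary (magic * Q * conj_transpose magic)"

lemma magic_conj_mult:
  assumes "A \<in> carrier_mat 4 4" "B \<in> carrier_mat 4 4"
  shows "magic * (A * B) * conj_transpose magic =
    (magic * A * conj_transpose magic) * (magic * B * conj_transpose magic)"
  using assms unitary_mat_left_inverse[OF unitary_magic] by (simp add: mat4_simps)

lemma magic_local_mult:
  assumes "magic_local P" "magic_local Q" shows "magic_local (P * Q)"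
proof -
  have "P \<in> carrier_mat 4 4" "Q \<in> carrier_mat 4 4"
    using assms unfolding magic_local_def real_orthogonal_def by auto
  thus ?thesis using assms
    unfolding magic_local_def by (simp add: real_orthogonal_mult magic_conj_mult local_unitary_mult)
qed

lemma magic_local_transpose:
  assumes "magic_local Q" shows "magic_local (transpose_mat Q)"
proof -
  have Q: "Q \<in> carrier_mat 4 4" "conj_transpose Q = transpose_mat Q"
    using assms unfolding magic_local_def real_orthogonal_def by auto
  have "magic * transpose_mat Q * conj_transpose magic = conj_transpose (magic * Q * conj_transpose magic)"
    using Q by (simp add: mat4_simps)
  thus ?thesis using assms
    unfolding magic_local_def by (simp add: real_orthogonal_transpose local_unitary_conj_transpose)
qed

lemma magic_local_givens: "k < 3 \<Longrightarrow> magic_local (givens k t)"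
proof -
  have "local_unitary (magic * givens 0 t * conj_transpose magic)"
    "local_unitary (magic * givens 1 t * conj_transpose magic)"
    "local_unitary (magic * givens 2 t * conj_transpose magic)"
    unfolding magic_conj_givens by (simp_all add: local_unitary_kron2 unitary_Ry unitary_Rz)
  thus "k < 3 \<Longrightarrow> magic_local (givens k t)"
    unfolding magic_local_def using real_orthogonal_givens
    by (elim less_3_cases[elim_format] disjE) simp_all
qed

definition magic_diag_circuit :: "real \<Rightarrow> real \<Rightarrow> real \<Rightarrow> complex mat" where
  "magic_diag_circuit a b c = CNOT1 * kron2 (Ry (pi/2) * Rz a) (Rz c) *
     CNOT1 * kron2 id2 (Rz b) * CNOT1 * kron2 (Ry (- pi/2)) id2 * CNOT1"

lemma Ry_quarter_turn:
  "Ry (pi/2) = mat2 half_sqrt2 half_sqrt2 (- half_sqrt2) half_sqrt2"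
  "Ry (- pi/2) = mat2 half_sqrt2 (- half_sqrt2) half_sqrt2 half_sqrt2"
  by (simp_all add: Ry_mat2 half_sqrt2_def cos_45 sin_45)

lemma magic_diag_circuit_eq:
  "magic_diag_circuit a b c = magic *
     mat_diag 4 (\<lambda>i. cis ([(a+b-c)/2, -(a+b+c)/2, (a-b+c)/2, (-a+b+c)/2] ! i)) * conj_transpose magic"
  unfolding magic_conj[OF mat_diag_dim]
  unfolding magic_diag_circuit_def mat_diag4 magic_unscaled_def Rz_mat2 Ry_quarter_turn id2_mat2 CNOT1_mat4
    mat2_mult kron2_mat2 mat4_mult mat4_conj_transpose mat4_smult
  by (simp add: mat4_eq_iff cis_mult half_sqrt2_squared algebra_simps)
     (simp add: diff_divide_distrib add_divide_distrib algebra_simps)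

lemma realizes_magic_diag_circuit:
  "\<exists>gs. realizes (magic_diag_circuit a b c) gs \<and> length gs = 9 \<and> cnot_count gs = 4"
proof -
  obtain g1 g2 g3 g4 g5 where
    g: "realizes (kron2 (Ry (pi/2)) id2) [g1]" "realizes (kron2 (Rz a) id2) [g2]"
      "realizes (kron2 id2 (Rz c)) [g3]" "realizes (kron2 id2 (Rz b)) [g4]"
      "realizes (kron2 (Ry (- pi/2)) id2) [g5]"
    and not_cnot: "g1 \<notin> cnot_gates" "g2 \<notin> cnot_gates" "g3 \<notin> cnot_gates" "g4 \<notin> cnot_gates"
      "g5 \<notin> cnot_gates"
    using realizes_rotation_gate by meson
  have cnot: "realizes CNOT1 [CNOT1]" "CNOT1 \<in> cnot_gates"
    by (auto intro: realizes_gate simp: elementary_gates_def cnot_gates_def)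
  have "kron2 (Ry (pi/2) * Rz a) (Rz c) = kron2 (Ry (pi/2)) id2 * kron2 (Rz a) id2 * kron2 id2 (Rz c)"
    by (simp add: kron2_mult id2_def mult_carrier_mat[of _ 2 2 _ 2] right_mult_one_mat[of _ 2 2]
        left_mult_one_mat[of _ 2 2])
  hence "magic_diag_circuit a b c = CNOT1 * kron2 (Ry (pi/2)) id2 * kron2 (Rz a) id2 * kron2 id2 (Rz c) *
      CNOT1 * kron2 id2 (Rz b) * CNOT1 * kron2 (Ry (- pi/2)) id2 * CNOT1"
    unfolding magic_diag_circuit_def by (simp add: mat4_simps CNOT1_mat4)
  hence "realizes (magic_diag_circuit a b c)
      ([CNOT1] @ [g5] @ [CNOT1] @ [g4] @ [CNOT1] @ [g3] @ [g2] @ [g1] @ [CNOT1])"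
    by (simp only:) (intro realizes_append g cnot(1))
  thus ?thesis using cnot(2) not_cnot
    by (intro exI[of _ "[CNOT1, g5, CNOT1, g4, CNOT1, g3, g2, g1, CNOT1]"]) (simp add: cnot_count_def)
qed

lemma magic_conj_unimodular_diag:
  assumes "\<forall>i<4. cmod (d i) = 1"
  shows "\<exists>c a b e. cmod c = 1 \<and> magic * mat_diag 4 d * conj_transpose magic = c \<cdot>\<^sub>m magic_diag_circuit a b e"
proof -
  \<comment> \<open>\<open>cis s\<close> takes out the mean phase; \<open>a, b, e\<close> invert the linear phase map of
    \<open>magic_diag_circuit_eq\<close> on the remaining trace-free part\<close>
  define \<phi> where "\<phi> i = Arg (d i)" for i
  define s where "s = (\<phi> 0 + \<phi> 1 + \<phi> 2 + \<phi> 3) / 4"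
  define a where "a = (\<phi> 0 - \<phi> 1 + \<phi> 2 - \<phi> 3) / 2"
  define b where "b = (\<phi> 0 - \<phi> 1 - \<phi> 2 + \<phi> 3) / 2"
  define e where "e = \<phi> 2 + \<phi> 3 - 2 * s"
  have "d i = cis (\<phi> i)" if "i < 4" for i
    using rcis_cmod_Arg[of "d i"] assms that unfolding \<phi>_def rcis_def by simp
  hence "mat_diag 4 d = cis s \<cdot>\<^sub>m mat_diag 4 (\<lambda>i. cis ([(a+b-e)/2, -(a+b+e)/2, (a-b+e)/2, (-a+b+e)/2] ! i))"
    unfolding mat_diag4 mat4_smult mat4_eq_iff by (simp add: cis_mult s_def a_def b_def e_def field_simps)
  hence "magic * mat_diag 4 d * conj_transpose magic = cis s \<cdot>\<^sub>m magic_diag_circuit a b e"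
    unfolding magic_diag_circuit_eq
    by (simp add: mat4_simps)
  thus ?thesis by (intro exI[of _ "cis s"]) auto
qed

section \<open>Completing a real unit vector by Givens rotations\<close>

definition identity_columns :: "nat \<Rightarrow> complex mat \<Rightarrow> bool" where
  "identity_columns k Q \<longleftrightarrow> (\<forall>j<k. \<forall>i<4. Q $$ (i,j) = (if i = j then 1 else 0))"

lemma magic_local_column_base:
  fixes x :: "nat \<Rightarrow> real"
  assumes "(\<Sum>i<4. (x i)\<^sup>2) = 1" "\<forall>i<2. x i = 0"
  shows "\<exists>Q. magic_local Q \<and> identity_columns 2 Q \<and>
    (\<forall>i<4. Q $$ (i,2) = of_real (x i))"
proof -
  have "(x 2)\<^sup>2 + (x 3)\<^sup>2 = 1" using assms by (simp add: sum_lessThan_4)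
  then obtain t where "cos t = x 2" "sin t = x 3" using sincos_total_2pi by metis
  thus ?thesis using magic_local_givens[of 2 t] assms(2)
    by (intro exI[of _ "givens 2 t"]) (auto simp: identity_columns_def givens_mat4 less_4_iff less_2_iff)
qed

lemma unit_vector_polar_split:
  fixes x :: "nat \<Rightarrow> real"
  assumes k: "k < 3" and x: "(\<Sum>i<4. (x i)\<^sup>2) = 1" "\<forall>i<k. x i = 0"
  obtains t y where "cos t = x k" "(\<Sum>i<4. (y i)\<^sup>2) = 1" "\<forall>i<k+1. y i = 0"
    "\<And>i. k < i \<Longrightarrow> i < 4 \<Longrightarrow> sin t * y i = x i"
proof -
  define tail where "tail = (\<Sum>i<4. if k < i then (x i)\<^sup>2 else 0)"
  have "(x i)\<^sup>2 = (if i = k then (x k)\<^sup>2 else 0) + (if k < i then (x i)\<^sup>2 else 0)" if "i < 4" for i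
    using x(2) by (cases "i < k") auto
  hence "(\<Sum>i<4. (x i)\<^sup>2) =
      (\<Sum>i<4. (if i = k then (x k)\<^sup>2 else 0) + (if k < i then (x i)\<^sup>2 else 0))"
    by (intro sum.cong) auto
  also have "\<dots> = (x k)\<^sup>2 + tail"
    unfolding tail_def using k by (simp add: sum.distrib)
  finally have xk_tail: "(x k)\<^sup>2 + tail = 1" using x(1) by simp
  define r where "r = sqrt tail"
  have tail: "tail \<ge> 0" unfolding tail_def by (intro sum_nonneg) auto
  hence "(x k)\<^sup>2 + r\<^sup>2 = 1" unfolding r_def using xk_tail by simp
  then obtain t where t: "cos t = x k" "sin t = r" using sincos_total_2pi by metis
  define y where "y i = (if k < i then (if r = 0 then (if i = k + 1 then 1 else 0) else x i / r) else 0)"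
    for i
  have "r * y i = x i" if "k < i" "i < 4" for i
  proof (cases "r = 0")
    case True
    have "(if k < i then (x i)\<^sup>2 else 0) \<le> tail"
      unfolding tail_def by (rule member_le_sum) (use that in auto)
    thus ?thesis using True that unfolding r_def y_def by simp
  qed (simp add: y_def that)
  moreover have "(\<Sum>i<4. (y i)\<^sup>2) = 1"
  proof (cases "r = 0")
    case True
    thus ?thesis using k unfolding y_def by (auto simp: sum_lessThan_4)
  next
    case False
    hence "(y i)\<^sup>2 = (if k < i then (x i)\<^sup>2 else 0) / r\<^sup>2" for i
      unfolding y_def by (simp add: power_divide)
    hence "(\<Sum>i<4. (y i)\<^sup>2) = tail / r\<^sup>2" unfolding tail_def by (simp add: sum_divide_distrib)
    thus ?thesis using False tail unfolding r_def by simp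
  qed
  moreover have "\<forall>i<k+1. y i = 0" unfolding y_def by simp
  ultimately show ?thesis using that t by simp
qed

lemma mult_givens_index_below:
  assumes "P \<in> carrier_mat 4 4" "i < 4" "j < k" "k < 3"
  shows "(P * givens k t) $$ (i,j) = P $$ (i,j)"
proof -
  have "givens k t $$ (l,j) = (if l = j then 1 else 0)" if "l < 4" for l
    using that assms(3,4) by (simp add: givens_def)
  thus ?thesis using assms
    by (simp add: index_mult_mat_sum[of _ 4 4 _ 4] if_distrib[of "(*) _"] cong: if_cong del: index_mult_mat)
qed

lemma mult_givens_index_pivot:
  assumes "P \<in> carrier_mat 4 4" "i < 4" "k < 3"
  shows "(P * givens k t) $$ (i,k) = P $$ (i,k) * cos t + P $$ (i,k+1) * sin t"
proof -
  have "givens k t $$ (l,k) =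
      (if l = k then complex_of_real (cos t) else 0) + (if l = k + 1 then complex_of_real (sin t) else 0)"
    if "l < 4" for l
    using that assms(3) by (simp add: givens_def)
  thus ?thesis using assms
    by (simp add: index_mult_mat_sum[of _ 4 4 _ 4] distrib_left sum.distrib if_distrib[of "(*) _"]
        cong: if_cong del: index_mult_mat)
qed

lemma magic_local_column_step:
  fixes x :: "nat \<Rightarrow> real"
  assumes k: "k < 2"
    and x: "(\<Sum>i<4. (x i)\<^sup>2) = 1" "\<forall>i<k. x i = 0"
    and IH: "\<And>y. (\<Sum>i<4. (y i)\<^sup>2) = 1 \<Longrightarrow> \<forall>i<k+1. y i = 0 \<Longrightarrow>
      \<exists>P. magic_local P \<and> identity_columns (k+1) P \<and> (\<forall>i<4. P $$ (i,k+1) = of_real (y i))"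
  shows "\<exists>Q. magic_local Q \<and> identity_columns k Q \<and> (\<forall>i<4. Q $$ (i,k) = of_real (x i))"
proof -
  obtain t y where t: "cos t = x k" and y: "(\<Sum>i<4. (y i)\<^sup>2) = 1" "\<forall>i<k+1. y i = 0"
    and ty: "\<And>i. k < i \<Longrightarrow> i < 4 \<Longrightarrow> sin t * y i = x i"
    using unit_vector_polar_split[of k x] k x by auto
  obtain P where P: "magic_local P" "identity_columns (k+1) P" "\<forall>i<4. P $$ (i,k+1) = of_real (y i)"
    using IH[OF y] by blast
  have Pc: "P \<in> carrier_mat 4 4" using P(1) unfolding magic_local_def real_orthogonal_def by auto
  have "identity_columns k (P * givens k t)"
    using P(2) Pc k mult_givens_index_below unfolding identity_columns_def by simp
  moreover have "(P * givens k t) $$ (i,k) = of_real (x i)" if "i < 4" for i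
  proof (cases "k < i")
    case True
    thus ?thesis using P(2,3) ty[of i] that mult_givens_index_pivot[OF Pc that] k
      unfolding identity_columns_def by (simp add: mult.commute flip: of_real_mult)
  next
    case False
    thus ?thesis using P(2,3) x(2) y(2) that t mult_givens_index_pivot[OF Pc that] k
      unfolding identity_columns_def by auto
  qed
  moreover have "magic_local (P * givens k t)" using P(1) magic_local_givens k by (simp add: magic_local_mult)
  ultimately show ?thesis by blast
qed

lemma magic_local_with_column:
  fixes x :: "nat \<Rightarrow> real"
  assumes "k < 3" "(\<Sum>i<4. (x i)\<^sup>2) = 1" "\<forall>i<k. x i = 0"
  shows "\<exists>Q. magic_local Q \<and> identity_columns k Q \<and>
    (\<forall>i<4. Q $$ (i,k) = of_real (x i))"
  using assms
proof (induction "2 - k" arbitrary: k x)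
  case 0
  hence "k = 2" by simp
  thus ?case using magic_local_column_base 0 by simp
next
  case (Suc n)
  show ?case
    by (rule magic_local_column_step) (use Suc in auto)
qed

section \<open>Real eigenvectors of symmetric unitary matrices\<close>

text \<open>Vectors of \<open>\<complex>\<^sup>4\<close> are represented as functions on the indices below 4.\<close>

definition mat_app :: "complex mat \<Rightarrow> (nat \<Rightarrow> complex) \<Rightarrow> nat \<Rightarrow> complex" where
  "mat_app S u i = (\<Sum>l<4. S $$ (i,l) * u l)"

lemma mat_app_mult:
  assumes "A \<in> carrier_mat 4 4" "B \<in> carrier_mat 4 4" "i < 4"
  shows "mat_app A (mat_app B v) i = mat_app (A * B) v i"
proof -
  have "mat_app A (mat_app B v) i = (\<Sum>l<4. \<Sum>m<4. A $$ (i,l) * (B $$ (l,m) * v m))"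
    unfolding mat_app_def by (simp add: sum_distrib_left)
  also have "\<dots> = (\<Sum>m<4. \<Sum>l<4. A $$ (i,l) * (B $$ (l,m) * v m))" by (rule sum.swap)
  also have "\<dots> = mat_app (A * B) v i"
    unfolding mat_app_def using assms
    by (auto simp: index_mult_mat_sum[of A 4 4 B 4] sum_distrib_right mult.assoc simp del: index_mult_mat
        intro!: sum.cong)
  finally show ?thesis .
qed

lemma mat_app_one: "i < 4 \<Longrightarrow> mat_app (1\<^sub>m 4) v i = v i"
  unfolding mat_app_def by (simp add: if_distrib[of "\<lambda>x. x * _"] cong: if_cong)

lemma mat_app_linear: "mat_app S (\<lambda>l. a * f l + b * g l) i = a * mat_app S f i + b * mat_app S g i"
  unfolding mat_app_def by (simp add: sum.distrib sum_distrib_left algebra_simps)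

lemma mat_app_scale: "mat_app S (\<lambda>l. a * f l) i = a * mat_app S f i"
  unfolding mat_app_def by (simp add: sum_distrib_left algebra_simps)

lemma mat_app_cong: "(\<And>l. l < 4 \<Longrightarrow> f l = g l) \<Longrightarrow> mat_app S f i = mat_app S g i"
  unfolding mat_app_def by (intro sum.cong) auto

lemma symmetric_mat_entry:
  "S \<in> carrier_mat n n \<Longrightarrow> transpose_mat S = S \<Longrightarrow> i < n \<Longrightarrow> j < n \<Longrightarrow> S $$ (i,j) = S $$ (j,i)"
  by (metis carrier_matD index_transpose_mat(1))

lemma mat_app_conj_transpose_symmetric:
  assumes "S \<in> carrier_mat 4 4" "transpose_mat S = S" "i < 4"
  shows "mat_app (conj_transpose S) v i = cnj (mat_app S (\<lambda>l. cnj (v l)) i)"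
  unfolding mat_app_def using assms symmetric_mat_entry[OF assms(1,2)]
  by (auto simp: cnj_sum intro!: sum.cong)

lemma mat_app_symmetric_bilinear:
  assumes "S \<in> carrier_mat 4 4" "transpose_mat S = S"
  shows "(\<Sum>i<4. mat_app S a i * b i) = (\<Sum>i<4. a i * mat_app S b i)"
proof -
  have "(\<Sum>i<4. mat_app S a i * b i) = (\<Sum>i<4. \<Sum>l<4. S $$ (i,l) * a l * b i)"
    unfolding mat_app_def by (simp add: sum_distrib_right)
  also have "\<dots> = (\<Sum>l<4. \<Sum>i<4. S $$ (i,l) * a l * b i)" by (rule sum.swap)
  also have "\<dots> = (\<Sum>l<4. a l * mat_app S b l)"
    unfolding mat_app_def using symmetric_mat_entry[OF assms]
    by (auto simp: sum_distrib_left algebra_simps intro!: sum.cong)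
  finally show ?thesis .
qed

definition diagonal_columns :: "nat \<Rightarrow> complex mat \<Rightarrow> bool" where
  "diagonal_columns k M \<longleftrightarrow> (\<forall>j<k. \<forall>i<4. i \<noteq> j \<longrightarrow> M $$ (i,j) = 0)"


lemma mat_app_shift:
  assumes "k \<le> 4"
  shows "mat_app S (\<lambda>i. if k \<le> i \<and> i < 4 then w $ (i - k) else 0) i = (\<Sum>l<4 - k. S $$ (i, l + k) * w $ l)"
    (is "mat_app S ?u i = _")
proof -
  have "mat_app S ?u i = (\<Sum>l\<in>{0..<4}. S $$ (i,l) * ?u l)"
    unfolding mat_app_def lessThan_atLeast0 ..
  also have "\<dots> = (\<Sum>l\<in>{0..<k}. S $$ (i,l) * ?u l) + (\<Sum>l\<in>{k..<4}. S $$ (i,l) * ?u l)"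
    by (rule sum.atLeastLessThan_concat[symmetric]) (use assms in auto)
  also have "(\<Sum>l\<in>{k..<4}. S $$ (i,l) * ?u l) = (\<Sum>l\<in>{0..<4 - k}. S $$ (i, l + k) * ?u (l + k))"
    using assms sum.shift_bounds_nat_ivl[of "\<lambda>l. S $$ (i,l) * ?u l" 0 k "4 - k"] by simp
  also have "\<dots> = (\<Sum>l<4 - k. S $$ (i, l + k) * w $ l)"
    unfolding lessThan_atLeast0 by (intro sum.cong) auto
  finally show ?thesis by simp
qed

lemma symmetric_eigenvector_vanishing_prefix:
  assumes S: "S \<in> carrier_mat 4 4" "transpose_mat S = S" and k: "k < 4" and D: "diagonal_columns k S"
  shows "\<exists>\<mu> u. (\<exists>i<4. u i \<noteq> 0) \<and> (\<forall>i<k. u i = 0) \<and> (\<forall>i<4. mat_app S u i = \<mu> * u i)"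
proof -
  define n where "n = 4 - k"
  have n: "n > 0" "n + k = 4" using k unfolding n_def by auto
  define T where "T = mat n n (\<lambda>(i,j). S $$ (i + k, j + k))"
  have T: "T \<in> carrier_mat n n" unfolding T_def by simp
  obtain \<mu> where "\<mu> \<in> spectrum T" using spectrum_non_empty[OF T n(1)] by blast
  then obtain w where "eigenvector T w \<mu>" unfolding spectrum_def eigenvalue_def by auto
  hence w: "w \<in> carrier_vec n" "w \<noteq> 0\<^sub>v n" "T *\<^sub>v w = \<mu> \<cdot>\<^sub>v w"
    unfolding eigenvector_def using T by auto
  define u where "u i = (if k \<le> i \<and> i < 4 then w $ (i - k) else 0)" for i
  have nonzero: "\<exists>i<4. u i \<noteq> 0"
  proof -
    obtain l where "l < n" "w $ l \<noteq> 0" using w(1,2) by (metis eq_vecI carrier_vecD index_zero_vec(1,2))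
    hence "u (l + k) \<noteq> 0" "l + k < 4" unfolding u_def using n by auto
    thus ?thesis by blast
  qed
  have "mat_app S u i = \<mu> * u i" if i: "i < 4" for i
  proof (cases "k \<le> i")
    case True
    have "(T *\<^sub>v w) $ (i - k) = (\<Sum>l<n. S $$ (i, l + k) * w $ l)"
      using True i n w(1) unfolding T_def by (auto simp: scalar_prod_def lessThan_atLeast0 intro!: sum.cong)
    moreover have "(T *\<^sub>v w) $ (i - k) = \<mu> * u i" unfolding w(3) u_def using True i n w(1) by auto
    ultimately show ?thesis using mat_app_shift k unfolding u_def n_def by simp
  next
    case False
    have "S $$ (i, l + k) = 0" if "l < n" for l
      using symmetric_mat_entry[OF S, of i "l + k"] D False i that n unfolding diagonal_columns_def by auto
    thus ?thesis using mat_app_shift k False unfolding u_def n_def by simp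
  qed
  moreover have "\<forall>i<k. u i = 0" unfolding u_def by simp
  ultimately show ?thesis using nonzero by blast
qed

text \<open>If \<open>S\<close> is symmetric unitary and \<open>S u = \<mu> u\<close>, then \<open>S (cnj u) = cnj u / cnj \<mu>\<close>; evaluating
  the bilinear form \<open>(cnj u)\<^sup>T S u\<close> in two ways gives \<open>|\<mu>| = 1\<close>, so \<open>cnj u\<close>, and with it \<open>Re u\<close> and
  \<open>Im u\<close>, are eigenvectors for \<open>\<mu>\<close> as well.\<close>

lemma symmetric_unitary_conj_eigenvector:
  assumes S: "unitary_mat 4 S" "transpose_mat S = S"
    and u: "\<exists>i<4. u i \<noteq> 0" "\<forall>i<4. mat_app S u i = \<mu> * u i"
  shows "\<forall>i<4. mat_app S (\<lambda>l. cnj (u l)) i = \<mu> * cnj (u i)"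
proof -
  have Sc: "S \<in> carrier_mat 4 4" using S(1) unfolding unitary_mat_def by simp
  define v where "v l = cnj (u l)" for l
  have u_v: "u i = \<mu> * cnj (mat_app S v i)" if i: "i < 4" for i
  proof -
    have "u i = mat_app (conj_transpose S * S) u i"
      using mat_app_one[OF i] unitary_mat_left_inverse[OF S(1)] by simp
    also have "\<dots> = mat_app (conj_transpose S) (mat_app S u) i"
      using mat_app_mult[of "conj_transpose S" S i u] Sc i by simp
    also have "\<dots> = \<mu> * mat_app (conj_transpose S) u i"
      using u(2) mat_app_scale by (metis mat_app_cong)
    also have "\<dots> = \<mu> * cnj (mat_app S v i)"
      unfolding mat_app_conj_transpose_symmetric[OF Sc S(2) i] v_def ..
    finally show ?thesis .
  qed
  have \<mu>0: "\<mu> \<noteq> 0" using u(1) u_v by force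
  have Sv: "mat_app S v i = v i / cnj \<mu>" if "i < 4" for i
    using arg_cong[OF u_v[OF that], of cnj] \<mu>0 unfolding v_def by (simp add: field_simps)
  define N where "N = (\<Sum>i<4. (cmod (u i))\<^sup>2)"
  have N: "(\<Sum>i<4. u i * v i) = of_real N"
    unfolding N_def v_def of_real_sum by (intro sum.cong refl) (metis complex_norm_square of_real_power)
  have "N \<noteq> 0"
  proof -
    obtain j where "j < 4" "u j \<noteq> 0" using u(1) by blast
    hence "0 < (cmod (u j))\<^sup>2" "(cmod (u j))\<^sup>2 \<le> N"
      unfolding N_def by (auto intro!: member_le_sum)
    thus ?thesis by linarith
  qed
  have "\<mu> * of_real N = (\<Sum>i<4. mat_app S u i * v i)"
    unfolding N[symmetric] using u(2) by (simp add: sum_distrib_left mult.assoc)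
  also have "\<dots> = (\<Sum>i<4. u i * mat_app S v i)" by (rule mat_app_symmetric_bilinear[OF Sc S(2)])
  also have "\<dots> = of_real N / cnj \<mu>"
    unfolding N[symmetric] using Sv by (simp add: sum_divide_distrib)
  finally have "1 / cnj \<mu> = \<mu>" using \<open>N \<noteq> 0\<close> \<mu>0 by (simp add: field_simps)
  thus ?thesis using Sv unfolding v_def by (metis times_divide_eq_left mult_1 mult.commute)
qed

lemma real_eigenvector_normalize:
  fixes z :: "nat \<Rightarrow> real"
  assumes "\<exists>i<4. z i \<noteq> 0" "\<forall>i<k. z i = 0" "\<forall>i<4. mat_app S (\<lambda>l. of_real (z l)) i = \<mu> * of_real (z i)"
  shows "\<exists>x::nat \<Rightarrow> real. (\<Sum>i<4. (x i)\<^sup>2) = 1 \<and> (\<forall>i<k. x i = 0) \<and>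
    (\<forall>i<4. mat_app S (\<lambda>l. of_real (x l)) i = \<mu> * of_real (x i))"
proof -
  define r where "r = sqrt (\<Sum>i<4. (z i)\<^sup>2)"
  have "r \<noteq> 0"
  proof
    assume "r = 0"
    hence "\<forall>i\<in>{..<4}. (z i)\<^sup>2 = 0" unfolding r_def by (subst sum_nonneg_eq_0_iff[symmetric]) auto
    thus False using assms(1) by auto
  qed
  define x where "x l = z l / r" for l
  have "(\<Sum>i<4. (x i)\<^sup>2) = (\<Sum>i<4. (z i)\<^sup>2) / r\<^sup>2"
    unfolding x_def by (simp add: power_divide sum_divide_distrib)
  also have "\<dots> = 1" using \<open>r \<noteq> 0\<close> unfolding r_def by (simp add: sum_nonneg)
  finally have "(\<Sum>i<4. (x i)\<^sup>2) = 1" .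
  moreover have "\<forall>i<k. x i = 0" unfolding x_def using assms(2) by simp
  moreover have "mat_app S (\<lambda>l. of_real (x l)) i = \<mu> * of_real (x i)" if "i < 4" for i
  proof -
    have "mat_app S (\<lambda>l. of_real (x l)) i = mat_app S (\<lambda>l. (1 / of_real r) * of_real (z l)) i"
      unfolding x_def by (intro mat_app_cong) simp
    also have "\<dots> = (1 / of_real r) * (\<mu> * of_real (z i))" unfolding mat_app_scale using assms(3) that by simp
    finally show ?thesis unfolding x_def by simp
  qed
  ultimately show ?thesis by blast
qed

lemma symmetric_unitary_real_eigenvector:
  assumes S: "unitary_mat 4 S" "transpose_mat S = S"
    and u: "\<exists>i<4. u i \<noteq> 0" "\<forall>i<k. u i = 0" "\<forall>i<4. mat_app S u i = \<mu> * u i"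
  shows "\<exists>x::nat \<Rightarrow> real. (\<Sum>i<4. (x i)\<^sup>2) = 1 \<and> (\<forall>i<k. x i = 0) \<and>
    (\<forall>i<4. mat_app S (\<lambda>l. of_real (x l)) i = \<mu> * of_real (x i))"
proof -
  have conj: "\<forall>i<4. mat_app S (\<lambda>l. cnj (u l)) i = \<mu> * cnj (u i)"
    using symmetric_unitary_conj_eigenvector[OF S u(1,3)] .
  define re where "re l = Re (u l)" for l
  define im where "im l = Im (u l)" for l
  have re: "complex_of_real (re l) = (1/2) * u l + (1/2) * cnj (u l)"
    and im: "complex_of_real (im l) = (-\<i>/2) * u l + (\<i>/2) * cnj (u l)" for l
    unfolding re_def im_def by (simp_all add: complex_eq_iff)
  have comb: "\<forall>i<4. mat_app S (\<lambda>l. a * u l + b * cnj (u l)) i = \<mu> * (a * u i + b * cnj (u i))" for a b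
    using u(3) conj by (simp add: mat_app_linear algebra_simps)
  have eig: "\<forall>i<4. mat_app S (\<lambda>l. of_real (re l)) i = \<mu> * of_real (re i)"
    "\<forall>i<4. mat_app S (\<lambda>l. of_real (im l)) i = \<mu> * of_real (im i)"
    unfolding re im by (rule comb)+
  have vanish: "\<forall>i<k. re i = 0" "\<forall>i<k. im i = 0" using u(2) unfolding re_def im_def by simp_all
  obtain j where "j < 4" "u j \<noteq> 0" using u(1) by blast
  hence "re j \<noteq> 0 \<or> im j \<noteq> 0" unfolding re_def im_def using complex_eq_iff[of "u j" 0] by simp
  thus ?thesis
  proof
    assume "re j \<noteq> 0"
    thus ?thesis using real_eigenvector_normalize[of re k S \<mu>] eig(1) vanish(1) \<open>j < 4\<close> by blast
  next
    assume "im j \<noteq> 0"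
    thus ?thesis using real_eigenvector_normalize[of im k S \<mu>] eig(2) vanish(2) \<open>j < 4\<close> by blast
  qed
qed

section \<open>Diagonalisation by magic-local matrices\<close>

lemma real_orthogonal_identity_column_row:
  assumes "real_orthogonal 4 Q" "identity_columns k Q" "j < k" "i < 4" "k \<le> 4"
  shows "Q $$ (j,i) = (if i = j then 1 else 0)"
proof -
  have Q: "Q \<in> carrier_mat 4 4" "transpose_mat Q * Q = 1\<^sub>m 4"
    using assms(1) unfolding real_orthogonal_def by auto
  have "(transpose_mat Q * Q) $$ (j,i) = (\<Sum>l<4. Q $$ (l,j) * Q $$ (l,i))"
    using Q(1) assms(3-) by (simp add: index_mult_mat_sum[of _ 4 4 _ 4] del: index_mult_mat)
  also have "\<dots> = (\<Sum>l<4. if l = j then Q $$ (j,i) else 0)"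
    using assms(2-) unfolding identity_columns_def by (intro sum.cong) auto
  also have "\<dots> = Q $$ (j,i)" using assms by simp
  finally show ?thesis using Q assms by auto
qed

lemma magic_local_one: "magic_local (1\<^sub>m 4)"
proof -
  have "kron2 id2 id2 = 1\<^sub>m 4" by (simp add: id2_mat2 kron2_mat2 one_mat4)
  thus ?thesis using unitary_magic
    unfolding magic_local_def real_orthogonal_def local_unitary_def unitary_mat_def
    by (metis conj_transpose_one id2_def one_carrier_mat right_mult_one_mat transpose_one left_mult_one_mat)
qed

lemma orthogonal_congruence_eigencolumn:
  assumes Q: "real_orthogonal 4 Q" and S: "S \<in> carrier_mat 4 4" and ij: "i < 4" "j < 4" "i \<noteq> j"
    and eig: "\<forall>l<4. (S * Q) $$ (l,j) = c * Q $$ (l,j)"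
  shows "(transpose_mat Q * S * Q) $$ (i,j) = 0"
proof -
  have Qc: "Q \<in> carrier_mat 4 4" "transpose_mat Q * Q = 1\<^sub>m 4" using Q unfolding real_orthogonal_def by auto
  have "(transpose_mat Q * S * Q) $$ (i,j) = (\<Sum>l<4. Q $$ (l,i) * (S * Q) $$ (l,j))"
    using Qc(1) S ij by (simp add: mat4_simps index_mult_mat_sum[of _ 4 4 _ 4] del: index_mult_mat)
  also have "\<dots> = c * (transpose_mat Q * Q) $$ (i,j)"
    using eig Qc(1) ij
    by (simp add: index_mult_mat_sum[of _ 4 4 _ 4] sum_distrib_left algebra_simps del: index_mult_mat)
  finally show ?thesis using Qc ij by simp
qed

lemma symmetric_unitary_deflation_step:
  assumes S: "unitary_mat 4 S" "transpose_mat S = S" and k: "k < 3" and D: "diagonal_columns k S"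
  shows "\<exists>Q. magic_local Q \<and> diagonal_columns (Suc k) (transpose_mat Q * S * Q)"
proof -
  have Sc: "S \<in> carrier_mat 4 4" using S(1) unfolding unitary_mat_def by simp
  obtain \<mu> u where "\<exists>i<4. u i \<noteq> 0" "\<forall>i<k. u i = 0" "\<forall>i<4. mat_app S u i = \<mu> * u i"
    using symmetric_eigenvector_vanishing_prefix[OF Sc S(2) _ D] k by auto
  then obtain x where x: "(\<Sum>i<4. (x i)\<^sup>2) = 1" "\<forall>i<k. x i = 0"
    "\<forall>i<4. mat_app S (\<lambda>l. of_real (x l)) i = \<mu> * of_real (x i)"
    using symmetric_unitary_real_eigenvector[OF S] by blast
  obtain Q where Q: "magic_local Q" "identity_columns k Q" "\<forall>i<4. Q $$ (i,k) = of_real (x i)"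
    using magic_local_with_column[OF k x(1,2)] by blast
  have Qo: "real_orthogonal 4 Q" using Q(1) unfolding magic_local_def by simp
  hence Qc: "Q \<in> carrier_mat 4 4" unfolding real_orthogonal_def by simp
  have SQ: "(S * Q) $$ (l,j) = (\<Sum>m<4. S $$ (l,m) * Q $$ (m,j))" if "l < 4" "j < 4" for l j
    using Sc Qc that by (simp add: index_mult_mat_sum[of _ 4 4 _ 4] del: index_mult_mat)
  have below: "\<forall>l<4. (S * Q) $$ (l,j) = S $$ (j,j) * Q $$ (l,j)" if "j < k" for j
  proof (intro allI impI)
    fix l :: nat assume "l < 4"
    have "(\<Sum>m<4. S $$ (l,m) * Q $$ (m,j)) = (\<Sum>m<4. if m = j then S $$ (l,j) else 0)"
      using Q(2) that unfolding identity_columns_def by (intro sum.cong) auto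
    thus "(S * Q) $$ (l,j) = S $$ (j,j) * Q $$ (l,j)"
      using SQ[OF \<open>l < 4\<close>] D Q(2) that k \<open>l < 4\<close> unfolding diagonal_columns_def identity_columns_def
      by (cases "l = j") auto
  qed
  have pivot: "\<forall>l<4. (S * Q) $$ (l,k) = \<mu> * Q $$ (l,k)"
    using SQ x(3) Q(3) k unfolding mat_app_def by simp
  have "(transpose_mat Q * S * Q) $$ (i,j) = 0" if "j < Suc k" "i < 4" "i \<noteq> j" for i j
  proof (cases "j < k")
    case True
    thus ?thesis using orthogonal_congruence_eigencolumn[OF Qo Sc, of i j "S $$ (j,j)"] below that k by auto
  next
    case False
    hence "j = k" using that by simp
    thus ?thesis using orthogonal_congruence_eigencolumn[OF Qo Sc, of i j \<mu>] pivot that k by auto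
  qed
  thus ?thesis using Q(1) unfolding diagonal_columns_def by blast
qed

lemma orthogonal_transpose_mult_column:
  assumes Q: "real_orthogonal 4 Q" and W: "W \<in> carrier_mat 4 4" and ij: "i < 4" "j < 4"
    and col: "\<forall>l<4. W $$ (l,j) = Q $$ (l,j)"
  shows "(transpose_mat Q * W) $$ (i,j) = (if i = j then 1 else 0)"
proof -
  have Qc: "Q \<in> carrier_mat 4 4" "transpose_mat Q * Q = 1\<^sub>m 4" using Q unfolding real_orthogonal_def by auto
  have "(transpose_mat Q * W) $$ (i,j) = (\<Sum>l<4. Q $$ (l,i) * W $$ (l,j))"
    using Qc(1) W ij by (simp add: index_mult_mat_sum[of _ 4 4 _ 4] del: index_mult_mat)
  also have "\<dots> = (transpose_mat Q * Q) $$ (i,j)"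
    using col Qc(1) ij by (simp add: index_mult_mat_sum[of _ 4 4 _ 4] del: index_mult_mat)
  finally show ?thesis using Qc ij by simp
qed

lemma real_orthogonal_deflation_step:
  assumes W: "real_orthogonal 4 W" and k: "k < 3" and D: "identity_columns k W"
  shows "\<exists>Q. magic_local Q \<and> identity_columns (Suc k) (transpose_mat Q * W)"
proof -
  have Wc: "W \<in> carrier_mat 4 4" "transpose_mat W * W = 1\<^sub>m 4" "conj_transpose W = transpose_mat W"
    using W unfolding real_orthogonal_def by auto
  define x where "x l = Re (W $$ (l,k))" for l
  have real: "W $$ (l,k) = of_real (x l)" if "l < 4" for l
  proof -
    have "cnj (W $$ (l,k)) = W $$ (l,k)"
      using arg_cong[OF Wc(3), of "\<lambda>A. A $$ (k,l)"] Wc(1) that k by simp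
    thus ?thesis unfolding x_def by (metis Reals_cnj_iff complex_is_Real_iff of_real_Re)
  qed
  have "(\<Sum>l<4. W $$ (l,k) * W $$ (l,k)) = 1"
    using arg_cong[OF Wc(2), of "\<lambda>A. A $$ (k,k)"] Wc(1) k
    by (simp add: index_mult_mat_sum[of _ 4 4 _ 4] del: index_mult_mat)
  hence "complex_of_real (\<Sum>l<4. (x l)\<^sup>2) = 1" using real by (simp add: power2_eq_square)
  hence x1: "(\<Sum>l<4. (x l)\<^sup>2) = 1" by (simp only: of_real_eq_1_iff)
  have x0: "\<forall>i<k. x i = 0"
    using real_orthogonal_identity_column_row[OF W D] k unfolding x_def by auto
  obtain Q where Q: "magic_local Q" "identity_columns k Q" "\<forall>i<4. Q $$ (i,k) = of_real (x i)"
    using magic_local_with_column[OF k x1 x0] by blast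
  have Qo: "real_orthogonal 4 Q" using Q(1) unfolding magic_local_def by simp
  have "\<forall>l<4. W $$ (l,j) = Q $$ (l,j)" if "j < Suc k" for j
    using D Q(2,3) real that unfolding identity_columns_def less_Suc_eq by auto
  hence "identity_columns (Suc k) (transpose_mat Q * W)"
    using orthogonal_transpose_mult_column[OF Qo Wc(1)] k unfolding identity_columns_def by simp
  thus ?thesis using Q(1) by blast
qed

lemma symmetric_unitary_orthogonal_congruence:
  assumes "real_orthogonal 4 Q" "unitary_mat 4 S" "transpose_mat S = S"
  shows "unitary_mat 4 (transpose_mat Q * S * Q)" "transpose_mat (transpose_mat Q * S * Q) = transpose_mat Q * S * Q"
proof -
  have Q: "Q \<in> carrier_mat 4 4" "unitary_mat 4 Q" "unitary_mat 4 (transpose_mat Q)"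
    using assms(1) real_orthogonal_unitary real_orthogonal_transpose unfolding real_orthogonal_def by auto
  show "unitary_mat 4 (transpose_mat Q * S * Q)" using Q assms(2) by (simp add: unitary_mat_mult)
  show "transpose_mat (transpose_mat Q * S * Q) = transpose_mat Q * S * Q"
    using Q(1) assms(2,3) unfolding unitary_mat_def by (simp add: mat4_simps)
qed

lemma diagonal_mat_of_symmetric_columns:
  assumes "M \<in> carrier_mat 4 4" "transpose_mat M = M" "diagonal_columns 3 M"
  shows "diagonal_mat M"
  unfolding diagonal_mat_def
proof (intro allI impI)
  fix i j assume ij: "i < dim_row M" "j < dim_col M" "i \<noteq> j"
  show "M $$ (i,j) = 0"
  proof (cases "j < 3")
    case False
    hence "i < 3" using ij assms(1) by auto
    thus ?thesis using assms ij symmetric_mat_entry[of M 4 i j] unfolding diagonal_columns_def by auto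
  qed (use assms ij in \<open>auto simp: diagonal_columns_def\<close>)
qed

lemma diagonal_mat_of_identity_columns:
  assumes "real_orthogonal 4 W" "identity_columns 3 W"
  shows "diagonal_mat W"
  unfolding diagonal_mat_def
proof (intro allI impI)
  fix i j assume ij: "i < dim_row W" "j < dim_col W" "i \<noteq> j"
  have W: "W \<in> carrier_mat 4 4" using assms(1) unfolding real_orthogonal_def by simp
  show "W $$ (i,j) = 0"
  proof (cases "j < 3")
    case False
    hence "i < 3" using ij W by auto
    thus ?thesis using real_orthogonal_identity_column_row[OF assms, of i j] ij W by auto
  qed (use assms ij W in \<open>auto simp: identity_columns_def\<close>)
qed

lemma symmetric_unitary_magic_local_diag:
  assumes S: "unitary_mat 4 S" "transpose_mat S = S"
  shows "\<exists>Q. magic_local Q \<and> diagonal_mat (transpose_mat Q * S * Q)"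
proof -
  have Sc: "S \<in> carrier_mat 4 4" using S(1) unfolding unitary_mat_def by simp
  have "\<exists>Q. magic_local Q \<and> diagonal_columns k (transpose_mat Q * S * Q)" if "k \<le> 3" for k
    using that
  proof (induction k)
    case 0
    show ?case using magic_local_one by (intro exI[of _ "1\<^sub>m 4"]) (simp add: diagonal_columns_def)
  next
    case (Suc k)
    then obtain Q where Q: "magic_local Q" "diagonal_columns k (transpose_mat Q * S * Q)" by auto
    have Qo: "real_orthogonal 4 Q" using Q(1) unfolding magic_local_def by simp
    obtain P where P: "magic_local P" "diagonal_columns (Suc k) (transpose_mat P * (transpose_mat Q * S * Q) * P)"
      using symmetric_unitary_deflation_step[OF symmetric_unitary_orthogonal_congruence[OF Qo S] _ Q(2)] Suc
      by auto
    have "P \<in> carrier_mat 4 4" "Q \<in> carrier_mat 4 4"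
      using P(1) Qo unfolding magic_local_def real_orthogonal_def by auto
    hence "transpose_mat (Q * P) * S * (Q * P) = transpose_mat P * (transpose_mat Q * S * Q) * P"
      using Sc by (simp add: mat4_simps)
    thus ?case using P Q(1) magic_local_mult by metis
  qed
  then obtain Q where "magic_local Q" "diagonal_columns 3 (transpose_mat Q * S * Q)" by blast
  moreover have "transpose_mat Q * S * Q \<in> carrier_mat 4 4" using Sc \<open>magic_local Q\<close>
    unfolding magic_local_def real_orthogonal_def by (simp add: mat4_simps)
  ultimately show ?thesis
    using diagonal_mat_of_symmetric_columns symmetric_unitary_orthogonal_congruence(2)[OF _ S]
    unfolding magic_local_def by blast
qed

lemma real_orthogonal_magic_local_diag:
  assumes W: "real_orthogonal 4 W"
  shows "\<exists>Q. magic_local Q \<and> diagonal_mat (transpose_mat Q * W)"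
proof -
  have Wc: "W \<in> carrier_mat 4 4" using W unfolding real_orthogonal_def by simp
  have "\<exists>Q. magic_local Q \<and> identity_columns k (transpose_mat Q * W)" if "k \<le> 3" for k
    using that
  proof (induction k)
    case 0
    show ?case using magic_local_one by (intro exI[of _ "1\<^sub>m 4"]) (simp add: identity_columns_def)
  next
    case (Suc k)
    then obtain Q where Q: "magic_local Q" "identity_columns k (transpose_mat Q * W)" by auto
    have Qo: "real_orthogonal 4 Q" using Q(1) unfolding magic_local_def by simp
    have "real_orthogonal 4 (transpose_mat Q * W)"
      by (intro real_orthogonal_mult real_orthogonal_transpose Qo W)
    then obtain P where P: "magic_local P" "identity_columns (Suc k) (transpose_mat P * (transpose_mat Q * W))"
      using real_orthogonal_deflation_step[OF _ _ Q(2)] Suc(2) by auto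
    have "P \<in> carrier_mat 4 4" "Q \<in> carrier_mat 4 4"
      using P(1) Qo unfolding magic_local_def real_orthogonal_def by auto
    hence "transpose_mat (Q * P) * W = transpose_mat P * (transpose_mat Q * W)"
      using Wc by (simp add: mat4_simps)
    thus ?case using P Q(1) magic_local_mult by metis
  qed
  then obtain Q where Q: "magic_local Q" "identity_columns 3 (transpose_mat Q * W)" by blast
  have "real_orthogonal 4 (transpose_mat Q * W)"
    using Q(1) W unfolding magic_local_def by (intro real_orthogonal_mult real_orthogonal_transpose) auto
  thus ?thesis using Q diagonal_mat_of_identity_columns by blast
qed

section \<open>The decomposition\<close>

text \<open>With \<open>V\<^sup>T V = Q\<^sub>1 diag \<delta> Q\<^sub>1\<^sup>T\<close>, dividing \<open>V Q\<^sub>1\<close> by a square root of \<open>diag \<delta>\<close> leaves a unitary \<open>W\<close> with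
  \<open>W\<^sup>T W = 1\<close>, i.e. a real orthogonal matrix.\<close>

lemma unitary_orthogonal_factor:
  assumes V: "unitary_mat 4 V"
  shows "\<exists>Q f. magic_local Q \<and> (\<forall>i<4. cmod (f i) = 1) \<and>
    real_orthogonal 4 (V * Q * mat_diag 4 (\<lambda>i. cnj (f i)))"
proof -
  have Vc: "V \<in> carrier_mat 4 4" using V unfolding unitary_mat_def by simp
  define S where "S = transpose_mat V * V"
  have S: "unitary_mat 4 S" "transpose_mat S = S"
    unfolding S_def using V Vc by (simp_all add: unitary_mat_mult unitary_mat_transpose transpose_mult)
  obtain Q where Q: "magic_local Q" "diagonal_mat (transpose_mat Q * S * Q)"
    using symmetric_unitary_magic_local_diag[OF S] by blast
  have Qo: "real_orthogonal 4 Q" using Q(1) unfolding magic_local_def by simp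
  hence Qc: "Q \<in> carrier_mat 4 4" unfolding real_orthogonal_def by simp
  define \<delta> where "\<delta> i = (transpose_mat Q * S * Q) $$ (i,i)" for i
  have \<delta>: "transpose_mat Q * S * Q = mat_diag 4 \<delta>" "\<forall>i<4. cmod (\<delta> i) = 1"
    using diagonal_unitary_mat_diag[OF symmetric_unitary_orthogonal_congruence(1)[OF Qo S] Q(2)]
    unfolding \<delta>_def by auto
  define f where "f i = csqrt (\<delta> i)" for i
  have f: "\<forall>i<4. cmod (f i) = 1" unfolding f_def using \<delta>(2) by simp
  define F' where "F' = mat_diag 4 (\<lambda>i. cnj (f i))"
  have F': "F' \<in> carrier_mat 4 4" "transpose_mat F' = F'" "unitary_mat 4 F'"
    unfolding F'_def using f by (simp_all add: transpose_mat_diag unitary_mat_diag)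
  define W where "W = V * Q * F'"
  have "transpose_mat W * W = F' * (transpose_mat Q * S * Q) * F'"
    unfolding W_def S_def using Vc Qc F' by (simp add: mat4_simps)
  also have "\<dots> = mat_diag 4 (\<lambda>i. cnj (f i) * \<delta> i * cnj (f i))"
    unfolding \<delta>(1) F'_def by simp
  also have "\<dots> = 1\<^sub>m 4"
  proof -
    have "cnj (f i) * \<delta> i * cnj (f i) = 1" if "i < 4" for i
    proof -
      have "\<delta> i = f i * f i" unfolding f_def by (simp flip: power2_eq_square)
      thus ?thesis using unit_modulus_cnj[of "f i"] f that by (simp add: algebra_simps)
    qed
    thus ?thesis by (auto intro: mat_diag_cong[where g = "\<lambda>_. 1", simplified])
  qed
  finally have "transpose_mat W * W = 1\<^sub>m 4" .
  moreover have "unitary_mat 4 W"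
    unfolding W_def using V real_orthogonal_unitary[OF Qo] F'(3) by (simp add: unitary_mat_mult)
  ultimately show ?thesis using Q(1) f unitary_real_orthogonal unfolding W_def F'_def by blast
qed

lemma unitary_magic_local_decomposition:
  assumes V: "unitary_mat 4 V"
  shows "\<exists>Q1 Q2 d. magic_local Q1 \<and> magic_local Q2 \<and> (\<forall>i<4. cmod (d i) = 1) \<and>
    V = Q2 * mat_diag 4 d * transpose_mat Q1"
proof -
  have Vc: "V \<in> carrier_mat 4 4" using V unfolding unitary_mat_def by simp
  obtain Q1 f where Q1: "magic_local Q1" and f: "\<forall>i<4. cmod (f i) = 1"
    and W_orth: "real_orthogonal 4 (V * Q1 * mat_diag 4 (\<lambda>i. cnj (f i)))"
    using unitary_orthogonal_factor[OF V] by blast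
  define F' where "F' = mat_diag 4 (\<lambda>i. cnj (f i))"
  define W where "W = V * Q1 * F'"
  have Wo: "real_orthogonal 4 W" using W_orth unfolding W_def F'_def .
  obtain Q2 where Q2: "magic_local Q2" "diagonal_mat (transpose_mat Q2 * W)"
    using real_orthogonal_magic_local_diag[OF Wo] by blast
  have Q1o: "real_orthogonal 4 Q1" and Q2o: "real_orthogonal 4 Q2"
    using Q1 Q2(1) unfolding magic_local_def by auto
  have Qc: "Q1 \<in> carrier_mat 4 4" "Q2 \<in> carrier_mat 4 4" "W \<in> carrier_mat 4 4" "F' \<in> carrier_mat 4 4"
    using Q1o Q2o Wo unfolding real_orthogonal_def F'_def by auto
  define e where "e i = (transpose_mat Q2 * W) $$ (i,i)" for i
  have "unitary_mat 4 (transpose_mat Q2 * W)"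
    using Wo Q2o by (intro unitary_mat_mult real_orthogonal_unitary real_orthogonal_transpose)
  hence e: "transpose_mat Q2 * W = mat_diag 4 e" "\<forall>i<4. cmod (e i) = 1"
    using diagonal_unitary_mat_diag Q2(2) unfolding e_def by auto
  have "Q2 * mat_diag 4 e = Q2 * transpose_mat Q2 * W"
    unfolding e(1)[symmetric] using Qc by (simp add: mat4_simps)
  hence W_eq: "W = Q2 * mat_diag 4 e"
    using real_orthogonal_right_inverse[OF Q2o] Qc by simp
  have "F' * mat_diag 4 f = 1\<^sub>m 4"
    unfolding F'_def using f
    by (auto simp: unit_modulus_cnj mult.commute intro: mat_diag_cong[where g = "\<lambda>_. 1", simplified])
  hence "W * mat_diag 4 f * transpose_mat Q1 = V * (Q1 * transpose_mat Q1)"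
    unfolding W_def using Vc Qc by (simp add: mat4_simps)
  hence "V = W * mat_diag 4 f * transpose_mat Q1"
    using real_orthogonal_right_inverse[OF Q1o] Vc by simp
  also have "\<dots> = Q2 * mat_diag 4 (\<lambda>i. e i * f i) * transpose_mat Q1"
    unfolding W_eq using Qc by (simp add: mat4_simps)
  finally show ?thesis using Q1 Q2(1) e(2) f
    by (intro exI[of _ Q1] exI[of _ Q2] exI[of _ "\<lambda>i. e i * f i"]) (simp add: norm_mult)
qed

lemma two_qubit_kak:
  assumes "unitary_mat 4 U"
  shows "\<exists>X Y c a b e. local_unitary X \<and> local_unitary Y \<and> cmod c = 1 \<and>
    U = c \<cdot>\<^sub>m (X * magic_diag_circuit a b e * Y)"
proof -
  have Uc: "U \<in> carrier_mat 4 4" using assms unfolding unitary_mat_def by simp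
  have M: "magic * conj_transpose magic = 1\<^sub>m 4" "conj_transpose magic * magic = 1\<^sub>m 4"
    using unitary_magic unitary_mat_left_inverse[OF unitary_magic] unfolding unitary_mat_def by auto
  have "unitary_mat 4 (conj_transpose magic * U * magic)"
    using assms unitary_magic unitary_mat_conj_transpose by (simp add: unitary_mat_mult)
  then obtain Q1 Q2 d where Q: "magic_local Q1" "magic_local Q2" and d: "\<forall>i<4. cmod (d i) = 1"
    and V: "conj_transpose magic * U * magic = Q2 * mat_diag 4 d * transpose_mat Q1"
    using unitary_magic_local_decomposition by blast
  have Qc: "Q1 \<in> carrier_mat 4 4" "Q2 \<in> carrier_mat 4 4"
    using Q unfolding magic_local_def real_orthogonal_def by auto
  obtain c a b e where c: "cmod c = 1"
    and D: "magic * mat_diag 4 d * conj_transpose magic = c \<cdot>\<^sub>m magic_diag_circuit a b e"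
    using magic_conj_unimodular_diag[OF d] by blast
  have "U = magic * (conj_transpose magic * U * magic) * conj_transpose magic"
    using Uc M by (simp add: mat4_simps)
  also have "\<dots> = (magic * Q2 * conj_transpose magic) * (magic * mat_diag 4 d * conj_transpose magic) *
      (magic * transpose_mat Q1 * conj_transpose magic)"
    unfolding V using Qc M by (simp add: mat4_simps)
  finally have "U = c \<cdot>\<^sub>m ((magic * Q2 * conj_transpose magic) * magic_diag_circuit a b e *
      (magic * transpose_mat Q1 * conj_transpose magic))"
    unfolding D using Qc by (simp add: mat4_simps magic_diag_circuit_eq)
  moreover have "local_unitary (magic * Q2 * conj_transpose magic)"
    "local_unitary (magic * transpose_mat Q1 * conj_transpose magic)"
    using Q magic_local_transpose unfolding magic_local_def by auto
  ultimately show ?thesis using c by blast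
qed

theorem theorem1:
  fixes U :: "complex mat"
  assumes "unitary4 U"
  shows "\<exists>c gs. cmod c = 1 \<and> set gs \<subseteq> elementary_gates \<and> length gs \<le> 23
           \<and> length (filter (\<lambda>g. g \<in> cnot_gates) gs) \<le> 4
           \<and> U = c \<cdot>\<^sub>m circuit_matrix gs"
proof -
  obtain X Y c a b e where XY: "local_unitary X" "local_unitary Y" and c: "cmod c = 1"
    and U: "U = c \<cdot>\<^sub>m (X * magic_diag_circuit a b e * Y)"
    using two_qubit_kak assms unfolding unitary4_iff_unitary_mat by blast
  obtain gsX gsC gsY where X: "realizes X gsX" "length gsX = 6" "cnot_count gsX = 0"
    and C: "realizes (magic_diag_circuit a b e) gsC" "length gsC = 9" "cnot_count gsC = 4"
    and Y: "realizes Y gsY" "length gsY = 6" "cnot_count gsY = 0"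
    using realizes_local_unitary[OF XY(1)] realizes_local_unitary[OF XY(2)] realizes_magic_diag_circuit
    by meson
  have "realizes U (gsY @ gsC @ gsX)"
    unfolding U by (intro realizes_phase[OF _ c] realizes_append X(1) Y(1) C(1))
  then obtain c' where "cmod c' = 1" "set (gsY @ gsC @ gsX) \<subseteq> elementary_gates"
    "U = c' \<cdot>\<^sub>m circuit_matrix (gsY @ gsC @ gsX)"
    unfolding realizes_def by blast
  thus ?thesis using X C Y unfolding cnot_count_def by (intro exI[of _ c'] exI[of _ "gsY @ gsC @ gsX"]) simp
qed

end
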